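(* Let $N\ge 2$, let $\lambda,\omega\in\mathbb{R}$, and consider on the phase space $\{(\mathbf{q},\mathbf{p})\in\mathbb{R}^N\times\mathbb{R}^N : 1+\lambda\mathbf{q}^2\neq 0\}$, with canonical Poisson bracket $\{q_i,p_j\}=\delta_{ij}$, the Hamiltonian $$\mathcal{H}_\lambda(\mathbf{q},\mathbf{p})=\frac{\mathbf{p}^2}{2(1+\lambda\mathbf{q}^2)}+\frac{\omega^2\mathbf{q}^2}{2(1+\lambda\mathbf{q}^2)}.$$ Then: (i) For any real $\lambda$, $\mathcal{H}_\lambda$ has the following constants of motion (functions Poisson-commuting with $\mathcal{H}_\lambda$): - the $2N-3$ angular momentum integrals $$C^{(m)}=\sum_{1\le i<j\le m}(q_ip_j-q_jp_i)^2,\qquad C_{(m)}=\sum_{N-m<i<j\le N}(q_ip_j-q_jp_i)^2,\qquad m=2,\dots,N,$$ where $C^{(N)}=C_{(N)}$; - the $N^2$ integrals (the curved Fradkin tensor) $$I_{ij}=p_ip_j-\bigl(2\lambda\,\mathcal{H}_\lambda(\mathbf{q},\mathbf{p})-\omega^2\bigr)q_iq_j,\qquad i,j=1,\dots,N,$$ which satisfy $\mathcal{H}_\lambda=\frac12\sum_{i=1}^N I_{ii}$. (ii) Each of the three sets $\{\mathcal{H}_\lambda, C^{(m)} : m=2,\dots,N\}$, $\{\mathcal{H}_\lambda, C_{(m)} : m=2,\dots,N\}$ and $\{I_{ii} : i=1,\dots,N\}$ consists of $N$ functionally independent functions in involution. (iii) For any fixed index $i\in\{1,\dots,N\}$, the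 set $\{\mathcal{H}_\lambda, C^{(m)}, C_{(m)}, I_{ii} : m=2,\dots,N\}$ consists of $2N-1$ functionally independent functions (so $\mathcal{H}_\lambda$ is maximally superintegrable).
   Context: Here $\mathbf{q}^2=\sum_{i=1}^N q_i^2$ and $\mathbf{p}^2=\sum_{i=1}^N p_i^2$. Functional independence means the differentials of the functions are linearly independent on an open dense subset of the phase space; involution means pairwise vanishing Poisson brackets. *)

theory Defs
  imports "HOL-Analysis.Analysis"
begin

text \<open>Phase space points are pairs (q,p) in R^N x R^N, where R^N = real ^ 'n with
  CARD('n) = N.  The index type is linearly ordered; coordinate number i (1-based,
  i = 1..N) refers to the i-th smallest element of the index type.\<close>

type_synonym 'n phase = "(real ^ 'n) \<times> (real ^ 'n)"

definition ix :: "nat \<Rightarrow> 'n::{finite,linorder}" where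
  "ix i = sorted_list_of_set (UNIV :: 'n set) ! (i - 1)"

definition qc :: "'n::{finite,linorder} phase \<Rightarrow> nat \<Rightarrow> real" where
  "qc x i = fst x $ ix i"

definition pc :: "'n::{finite,linorder} phase \<Rightarrow> nat \<Rightarrow> real" where
  "pc x i = snd x $ ix i"

definition qsq :: "'n::{finite,linorder} phase \<Rightarrow> real" where
  "qsq x = (\<Sum>i=1..CARD('n). (qc x i)\<^sup>2)"

definition psq :: "'n::{finite,linorder} phase \<Rightarrow> real" where
  "psq x = (\<Sum>i=1..CARD('n). (pc x i)\<^sup>2)"

definition phase_space :: "real \<Rightarrow> 'n::{finite,linorder} phase set" where
  "phase_space lam = {x. 1 + lam * qsq x \<noteq> 0}"

definition Ham :: "real \<Rightarrow> real \<Rightarrow> 'n::{finite,linorder} phase \<Rightarrow> real" where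
  "Ham lam \<omega> x = psq x / (2 * (1 + lam * qsq x)) + \<omega>\<^sup>2 * qsq x / (2 * (1 + lam * qsq x))"

definition angmom :: "'n::{finite,linorder} phase \<Rightarrow> nat \<Rightarrow> nat \<Rightarrow> real" where
  "angmom x i j = qc x i * pc x j - qc x j * pc x i"

definition Cup :: "nat \<Rightarrow> 'n::{finite,linorder} phase \<Rightarrow> real" where
  "Cup m x = (\<Sum>j\<in>{1..m}. \<Sum>i\<in>{1..<j}. (angmom x i j)\<^sup>2)"

definition Cdown :: "nat \<Rightarrow> 'n::{finite,linorder} phase \<Rightarrow> real" where
  "Cdown m x = (\<Sum>j\<in>{CARD('n) - m <..CARD('n)}. \<Sum>i\<in>{CARD('n) - m <..<j}. (angmom x i j)\<^sup>2)"

definition Frad :: "real \<Rightarrow> real \<Rightarrow> nat \<Rightarrow> nat \<Rightarrow> 'n::{finite,linorder} phase \<Rightarrow> real" where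
  "Frad lam \<omega> i j x = pc x i * pc x j - (2 * lam * Ham lam \<omega> x - \<omega>\<^sup>2) * qc x i * qc x j"

definition dq :: "('n::{finite,linorder} phase \<Rightarrow> real) \<Rightarrow> nat \<Rightarrow> 'n phase \<Rightarrow> real" where
  "dq F i x = frechet_derivative F (at x) (axis (ix i) 1, 0)"

definition dp :: "('n::{finite,linorder} phase \<Rightarrow> real) \<Rightarrow> nat \<Rightarrow> 'n phase \<Rightarrow> real" where
  "dp F i x = frechet_derivative F (at x) (0, axis (ix i) 1)"

definition poisson :: "('n::{finite,linorder} phase \<Rightarrow> real) \<Rightarrow> ('n phase \<Rightarrow> real) \<Rightarrow> 'n phase \<Rightarrow> real" where
  "poisson F G x = (\<Sum>i=1..CARD('n). dq F i x * dp G i x - dp F i x * dq G i x)"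

definition poisson_commute :: "'n::{finite,linorder} phase set \<Rightarrow> ('n phase \<Rightarrow> real) \<Rightarrow> ('n phase \<Rightarrow> real) \<Rightarrow> bool" where
  "poisson_commute M F G \<longleftrightarrow>
     (\<forall>x\<in>M. F differentiable (at x) \<and> G differentiable (at x) \<and> poisson F G x = 0)"

definition in_involution :: "'n::{finite,linorder} phase set \<Rightarrow> ('n phase \<Rightarrow> real) list \<Rightarrow> bool" where
  "in_involution M fs \<longleftrightarrow> (\<forall>k<length fs. \<forall>l<length fs. poisson_commute M (fs!k) (fs!l))"

definition differentials_indep :: "('n::{finite,linorder} phase \<Rightarrow> real) list \<Rightarrow> 'n phase \<Rightarrow> bool" where
  "differentials_indep fs x \<longleftrightarrow>
     (\<forall>k<length fs. (fs!k) differentiable (at x)) \<and>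
     (\<forall>c :: nat \<Rightarrow> real.
        (\<forall>v. (\<Sum>k<length fs. c k * frechet_derivative (fs!k) (at x) v) = 0) \<longrightarrow>
        (\<forall>k<length fs. c k = 0))"

definition funct_indep :: "'n::{finite,linorder} phase set \<Rightarrow> ('n phase \<Rightarrow> real) list \<Rightarrow> bool" where
  "funct_indep M fs \<longleftrightarrow>
     (\<exists>U. open U \<and> U \<subseteq> M \<and> M \<subseteq> closure U \<and> (\<forall>x\<in>U. differentials_indep fs x))"

end

theory Submission
  imports Defs
begin

text \<open>
  Write \<open>Q\<^sub>A, P\<^sub>A, S\<^sub>A\<close> for the partial sums of \<open>q\<^sub>i\<^sup>2, p\<^sub>i\<^sup>2, q\<^sub>i p\<^sub>i\<close> over a set \<open>A\<close> of
  coordinates. By Lagrange's identity the angular momentum integrals are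
  \<open>C\<^sub>A = Q\<^sub>A P\<^sub>A - S\<^sub>A\<^sup>2\<close> for intervals \<open>A\<close>, and a gradient computation shows that \<open>C\<^sub>A\<close>
  Poisson-commutes with every function whose gradient on the \<open>A\<close>-coordinates has the form
  \<open>(\<alpha> q + \<gamma> p, \<beta> p + \<gamma> q)\<close>; this covers \<open>\<H>\<^sub>\<lambda>\<close> and \<open>C\<^sub>B\<close> for \<open>B \<supseteq> A\<close>. The Fradkin tensor is
  handled with the identity \<open>2\<lambda>\<H>\<^sub>\<lambda> - \<omega>\<^sup>2 = (\<lambda>p\<^sup>2 - \<omega>\<^sup>2) / (1 + \<lambda>q\<^sup>2)\<close>.

  For functional independence, the points where finitely many nonzero polynomials do not vanish
  form an open dense set. At such points the differentials are evaluated on test vectors (the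
  dilation \<open>(q, -p)\<close>, the shear \<open>(0, q)\<close>, the unit vectors \<open>\<partial>/\<partial>p\<^sub>j\<close> and infinitesimal
  rotations of the coordinate pairs) chosen so that the matrix of values is triangular, its
  diagonal entries being nonzero multiples of the chosen polynomials. For the diagonal Fradkin
  integrals \<open>I\<^sub>i\<^sub>i\<close> a direct elimination using \<open>\<partial>/\<partial>p\<^sub>j\<close> replaces the triangular argument.
\<close>

section \<open>Nonvanishing sets of polynomial functions\<close>

lemma real_polynomial_function_finite_roots:
  fixes p :: "real \<Rightarrow> real"
  assumes "real_polynomial_function p" and "p t \<noteq> 0"
  shows "finite {s. p s = 0}"
proof -
  obtain a n where p: "p = (\<lambda>s. \<Sum>i\<le>n. a i * s ^ i)"
    using assms(1) real_polynomial_function_iff_sum by blast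
  with assms(2) have "\<exists>i\<le>n. a i \<noteq> 0"
    by (metis (no_types, lifting) mult_eq_0_iff sum.neutral atMost_iff)
  then show ?thesis
    unfolding p by (simp add: polyfun_finite_roots)
qed

lemma real_polynomial_function_on_line:
  assumes "real_polynomial_function g"
  shows "real_polynomial_function (\<lambda>t::real. g (x + t *\<^sub>R v))"
proof -
  have "polynomial_function (\<lambda>t::real. x + t *\<^sub>R v)"
    by (intro polynomial_function_add polynomial_function_mult polynomial_function_id) auto
  from real_polynomial_function_compose[OF this assms] show ?thesis
    by (simp add: o_def)
qed

lemma real_polynomial_function_nonzero_dense:
  fixes g :: "'a::real_normed_vector \<Rightarrow> real"
  assumes g: "real_polynomial_function g" and y: "g y \<noteq> 0"
  shows "closure {x. g x \<noteq> 0} = UNIV"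
proof -
  have "x \<in> closure {x. g x \<noteq> 0}" for x
  proof -
    define \<phi> where "\<phi> t = x + t *\<^sub>R (y - x)" for t :: real
    have "finite {t. g (\<phi> t) = 0}"
      using real_polynomial_function_finite_roots[where t = 1, OF real_polynomial_function_on_line[OF g]]
      using y by (simp add: \<phi>_def)
    then have "closure (- {t. g (\<phi> t) = 0}) = UNIV"
      by (simp add: closure_complement empty_interior_finite)
    moreover have "\<phi> ` closure (- {t. g (\<phi> t) = 0}) \<subseteq> closure {x. g x \<noteq> 0}"
    proof (rule image_closure_subset)
      show "continuous_on (closure (- {t. g (\<phi> t) = 0})) \<phi>"
        unfolding \<phi>_def by (intro continuous_intros)
    qed (auto intro: closure_subset[THEN subsetD])
    ultimately show ?thesis
      by (metis UNIV_I \<phi>_def image_subset_iff add_0_right scale_zero_left)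
  qed
  then show ?thesis by auto
qed

lemma real_polynomial_function_open_nonzero:
  "real_polynomial_function g \<Longrightarrow> open {x. g x \<noteq> 0}"
  by (intro open_Collect_neq continuous_at_imp_continuous_on ballI continuous_real_polymonial_function)
     auto

lemma open_dense_common_nonzero:
  fixes M :: "'a::real_normed_vector set" and G :: "('a \<Rightarrow> real) set"
  assumes "finite G" and "\<forall>g\<in>G. real_polynomial_function g \<and> (\<exists>y. g y \<noteq> 0)" and "open M"
  shows "open (M \<inter> {x. \<forall>g\<in>G. g x \<noteq> 0}) \<and> M \<subseteq> closure (M \<inter> {x. \<forall>g\<in>G. g x \<noteq> 0})"
  using assms
proof (induction G rule: finite_induct)
  case empty
  then show ?case using closure_subset by auto
next
  case (insert g G)
  let ?U = "M \<inter> {x. \<forall>g\<in>G. g x \<noteq> 0}"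
  have U: "open ?U" "M \<subseteq> closure ?U"
    using insert by auto
  have g: "open {x. g x \<noteq> 0}" "closure {x. g x \<noteq> 0} = UNIV"
    using insert.prems real_polynomial_function_open_nonzero real_polynomial_function_nonzero_dense
    by auto
  have "M \<inter> {x. \<forall>g\<in>insert g G. g x \<noteq> 0} = ?U \<inter> {x. g x \<noteq> 0}"
    by auto
  moreover have "closure ?U \<subseteq> closure (?U \<inter> {x. g x \<noteq> 0})"
    using open_Int_closure_subset[OF U(1), of "{x. g x \<noteq> 0}"] g(2)
    by (intro closure_minimal) auto
  ultimately show ?case
    using U g(1) by auto
qed

lemma funct_indep_intro:
  assumes "open M" and "finite G" and "\<forall>g\<in>G. real_polynomial_function g \<and> (\<exists>y. g y \<noteq> 0)"
    and "\<And>x. x \<in> M \<Longrightarrow> \<forall>g\<in>G. g x \<noteq> 0 \<Longrightarrow> differentials_indep fs x"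
  shows "funct_indep M fs"
  unfolding funct_indep_def
  using open_dense_common_nonzero[OF assms(2,3,1)] assms(4)
  by (intro exI[of _ "M \<inter> {x. \<forall>g\<in>G. g x \<noteq> 0}"]) auto

section \<open>Triangular systems of differentials\<close>

lemma differentials_indep_triangular:
  fixes F :: "'a \<Rightarrow> 'n::{finite,linorder} phase \<Rightarrow> real" and r :: "'a \<Rightarrow> nat"
  assumes dist: "distinct ls"
    and diff: "\<And>a. a \<in> set ls \<Longrightarrow> F a differentiable (at x)"
    and diag: "\<And>a. a \<in> set ls \<Longrightarrow> frechet_derivative (F a) (at x) (v a) \<noteq> 0"
    and tri: "\<And>a b. a \<in> set ls \<Longrightarrow> b \<in> set ls \<Longrightarrow> b \<noteq> a \<Longrightarrow> r a \<le> r b \<Longrightarrow>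
                 frechet_derivative (F b) (at x) (v a) = 0"
  shows "differentials_indep (map F ls) x"
  unfolding differentials_indep_def
proof (intro conjI allI impI)
  show "map F ls ! k differentiable (at x)" if "k < length (map F ls)" for k
    using that diff by simp
next
  fix c :: "nat \<Rightarrow> real" and k
  assume h: "\<forall>v. (\<Sum>l<length (map F ls). c l * frechet_derivative (map F ls ! l) (at x) v) = 0"
  show "k < length (map F ls) \<Longrightarrow> c k = 0"
  proof (induction "r (ls ! k)" arbitrary: k rule: less_induct)
    case less
    then have k: "k < length ls" by simp
    have "c l * frechet_derivative (F (ls ! l)) (at x) (v (ls ! k)) = 0" if "l \<in> {..<length ls} - {k}" for l
    proof (cases "r (ls ! l) < r (ls ! k)")
      case True
      then show ?thesis using less.hyps that by simp
    next
      case False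
      moreover have "ls ! l \<noteq> ls ! k"
        using that k dist by (simp add: nth_eq_iff_index_eq)
      ultimately show ?thesis
        using tri[of "ls ! k" "ls ! l"] that k by simp
    qed
    then have "(\<Sum>l\<in>{..<length ls} - {k}. c l * frechet_derivative (F (ls ! l)) (at x) (v (ls ! k))) = 0"
      by (rule sum.neutral[OF ballI])
    then have "c k * frechet_derivative (F (ls ! k)) (at x) (v (ls ! k)) = 0"
      using h[rule_format, of "v (ls ! k)"] k by (simp add: sum.remove)
    then show "c k = 0"
      using diag k by simp
  qed
qed

lemma frechet_derivative_lincomb:
  assumes "f differentiable (at x)"
  shows "frechet_derivative f (at x) (a *\<^sub>R u - b *\<^sub>R w) =
           a *\<^sub>R frechet_derivative f (at x) u - b *\<^sub>R frechet_derivative f (at x) w"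
proof -
  have "linear (frechet_derivative f (at x))"
    using assms frechet_derivative_works has_derivative_linear by blast
  then show ?thesis
    by (simp add: linear_diff linear_scale)
qed

section \<open>Coordinates and gradients\<close>

lemma ix_bij: "bij_betw (ix :: nat \<Rightarrow> 'n::{finite,linorder}) {1..CARD('n)} UNIV"
proof -
  let ?xs = "sorted_list_of_set (UNIV :: 'n set)"
  have "bij_betw ((!) ?xs) {..<CARD('n)} UNIV"
    by (rule bij_betw_nth) auto
  moreover have "bij_betw (\<lambda>i. i - 1) {1..CARD('n)} {..<CARD('n)}"
    by (rule bij_betw_byWitness[where f'="\<lambda>i. i + 1"]) auto
  ultimately have "bij_betw ((!) ?xs \<circ> (\<lambda>i. i - 1)) {1..CARD('n)} UNIV"
    using bij_betw_trans by blast
  then show ?thesis unfolding ix_def comp_def by simp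
qed

definition ix_inv :: "'n::{finite,linorder} \<Rightarrow> nat" where
  "ix_inv = the_inv_into {1..CARD('n)} ix"

lemma ix_inv_ix: "i \<in> {1..CARD('n)} \<Longrightarrow> ix_inv (ix i :: 'n::{finite,linorder}) = i"
  using ix_bij[where 'n='n] by (simp add: ix_inv_def bij_betw_def the_inv_into_f_f)

lemma ix_ix_inv: "ix (ix_inv k) = (k :: 'n::{finite,linorder})"
  using ix_bij[where 'n='n] by (simp add: ix_inv_def bij_betw_def f_the_inv_into_f)

definition phase_of :: "(nat \<Rightarrow> real) \<Rightarrow> (nat \<Rightarrow> real) \<Rightarrow> 'n::{finite,linorder} phase" where
  "phase_of u w = ((\<chi> k. u (ix_inv k)), (\<chi> k. w (ix_inv k)))"

lemma qc_phase_of [simp]: "i \<in> {1..CARD('n)} \<Longrightarrow> qc (phase_of u w :: 'n::{finite,linorder} phase) i = u i"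
  by (simp add: qc_def phase_of_def ix_inv_ix)

lemma pc_phase_of [simp]: "i \<in> {1..CARD('n)} \<Longrightarrow> pc (phase_of u w :: 'n::{finite,linorder} phase) i = w i"
  by (simp add: pc_def phase_of_def ix_inv_ix)

lemma axis_eq_phase_of:
  assumes "j \<in> {1..CARD('n)}"
  shows "((axis (ix j) 1, 0) :: 'n::{finite,linorder} phase) = phase_of (\<lambda>i. if i = j then 1 else 0) (\<lambda>i. 0)"
    and "((0, axis (ix j) 1) :: 'n phase) = phase_of (\<lambda>i. 0) (\<lambda>i. if i = j then 1 else 0)"
proof -
  have "ix_inv k = j \<longleftrightarrow> k = ix j" for k :: 'n
    using ix_inv_ix[OF assms] ix_ix_inv[of k] by metis
  then show "((axis (ix j) 1, 0) :: 'n phase) = phase_of (\<lambda>i. if i = j then 1 else 0) (\<lambda>i. 0)"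
    and "((0, axis (ix j) 1) :: 'n phase) = phase_of (\<lambda>i. 0) (\<lambda>i. if i = j then 1 else 0)"
    by (simp_all add: phase_of_def vec_eq_iff axis_def)
qed

lemma bounded_linear_qc: "bounded_linear (\<lambda>x::'n::{finite,linorder} phase. qc x i)"
  unfolding qc_def by (intro bounded_linear_compose[OF bounded_linear_vec_nth] bounded_linear_fst)

lemma bounded_linear_pc: "bounded_linear (\<lambda>x::'n::{finite,linorder} phase. pc x i)"
  unfolding pc_def by (intro bounded_linear_compose[OF bounded_linear_vec_nth] bounded_linear_snd)

lemma mult_if_one_zero:
  "(if P then 1 else 0) * y = (if P then y else (0::real))"
  "y * (if P then 1 else 0) = (if P then y else (0::real))"
  by simp_all

definition has_grad :: "('n::{finite,linorder} phase \<Rightarrow> real) \<Rightarrow>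
    'n phase \<Rightarrow> (nat \<Rightarrow> real) \<Rightarrow> (nat \<Rightarrow> real) \<Rightarrow> bool" where
  "has_grad F x a b \<longleftrightarrow> (F has_derivative (\<lambda>h. \<Sum>i=1..CARD('n). a i * qc h i + b i * pc h i)) (at x)"

lemma has_grad_differentiable: "has_grad F x a b \<Longrightarrow> F differentiable (at x)"
  unfolding has_grad_def differentiable_def by blast

lemma frechet_derivative_has_grad:
  assumes "has_grad (F :: 'n::{finite,linorder} phase \<Rightarrow> real) x a b"
  shows "frechet_derivative F (at x) (phase_of u w) = (\<Sum>i=1..CARD('n). a i * u i + b i * w i)"
proof -
  have "frechet_derivative F (at x) = (\<lambda>h. \<Sum>i=1..CARD('n). a i * qc h i + b i * pc h i)"
    using assms unfolding has_grad_def by (rule frechet_derivative_at[symmetric])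
  then show ?thesis by (auto intro!: sum.cong)
qed

lemma dq_has_grad:
  "has_grad F (x :: 'n::{finite,linorder} phase) a b \<Longrightarrow> i \<in> {1..CARD('n)} \<Longrightarrow> dq F i x = a i"
  unfolding dq_def by (simp add: axis_eq_phase_of frechet_derivative_has_grad mult_if_one_zero sum.delta')

lemma dp_has_grad:
  "has_grad F (x :: 'n::{finite,linorder} phase) a b \<Longrightarrow> i \<in> {1..CARD('n)} \<Longrightarrow> dp F i x = b i"
  unfolding dp_def by (simp add: axis_eq_phase_of frechet_derivative_has_grad mult_if_one_zero sum.delta')

lemma poisson_has_grad:
  "has_grad F (x :: 'n::{finite,linorder} phase) a b \<Longrightarrow> has_grad G x c d \<Longrightarrow>
      poisson F G x = (\<Sum>i=1..CARD('n). a i * d i - b i * c i)"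
  unfolding poisson_def by (rule sum.cong) (auto simp: dq_has_grad dp_has_grad)

lemma poisson_self: "poisson F F x = 0"
  unfolding poisson_def by (simp add: mult.commute)

lemma poisson_anticomm: "poisson F G x = - poisson G F x"
  unfolding poisson_def by (simp add: sum_negf[symmetric] mult.commute)

lemma poisson_commute_sym: "poisson_commute M F G \<Longrightarrow> poisson_commute M G F"
  unfolding poisson_commute_def using poisson_anticomm[of G F] by auto

lemma has_grad_cong:
  "has_grad F x a b \<Longrightarrow> (\<And>i. i \<in> {1..CARD('n)} \<Longrightarrow> a i = a' i) \<Longrightarrow>
   (\<And>i. i \<in> {1..CARD('n)} \<Longrightarrow> b i = b' i) \<Longrightarrow> has_grad (F :: 'n::{finite,linorder} phase \<Rightarrow> real) x a' b'"
  unfolding has_grad_def by (erule has_derivative_eq_rhs) (auto intro!: sum.cong ext)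

lemma has_grad_qc:
  "k \<in> {1..CARD('n)} \<Longrightarrow> has_grad (\<lambda>x::'n::{finite,linorder} phase. qc x k) x
      (\<lambda>i. if i = k then 1 else 0) (\<lambda>i. 0)"
  unfolding has_grad_def
  by (rule has_derivative_eq_rhs[OF bounded_linear_imp_has_derivative[OF bounded_linear_qc]])
     (simp add: mult_if_one_zero sum.delta')

lemma has_grad_pc:
  "k \<in> {1..CARD('n)} \<Longrightarrow> has_grad (\<lambda>x::'n::{finite,linorder} phase. pc x k) x
      (\<lambda>i. 0) (\<lambda>i. if i = k then 1 else 0)"
  unfolding has_grad_def
  by (rule has_derivative_eq_rhs[OF bounded_linear_imp_has_derivative[OF bounded_linear_pc]])
     (simp add: mult_if_one_zero sum.delta')

lemma has_grad_const: "has_grad (\<lambda>x::'n::{finite,linorder} phase. c) x (\<lambda>i. 0) (\<lambda>i. 0)"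
  unfolding has_grad_def by (rule has_derivative_eq_rhs[OF has_derivative_const]) auto

lemma has_grad_add:
  "has_grad F x a b \<Longrightarrow> has_grad G x c d \<Longrightarrow>
   has_grad (\<lambda>x::'n::{finite,linorder} phase. F x + G x) x (\<lambda>i. a i + c i) (\<lambda>i. b i + d i)"
  unfolding has_grad_def
  by (rule has_derivative_eq_rhs[OF has_derivative_add])
     (auto simp: sum.distrib[symmetric] algebra_simps intro!: ext)

lemma has_grad_diff:
  "has_grad F x a b \<Longrightarrow> has_grad G x c d \<Longrightarrow>
   has_grad (\<lambda>x::'n::{finite,linorder} phase. F x - G x) x (\<lambda>i. a i - c i) (\<lambda>i. b i - d i)"
  unfolding has_grad_def
  by (rule has_derivative_eq_rhs[OF has_derivative_diff])
     (auto simp: sum_subtractf[symmetric] algebra_simps intro!: ext)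

lemma has_grad_mult:
  "has_grad F x a b \<Longrightarrow> has_grad G x c d \<Longrightarrow>
   has_grad (\<lambda>x::'n::{finite,linorder} phase. F x * G x) x
     (\<lambda>i. F x * c i + G x * a i) (\<lambda>i. F x * d i + G x * b i)"
  unfolding has_grad_def
  by (rule has_derivative_eq_rhs[OF has_derivative_mult])
     (auto simp: sum.distrib[symmetric] sum_distrib_left algebra_simps intro!: ext)

lemma has_grad_cmult:
  "has_grad F x a b \<Longrightarrow> has_grad (\<lambda>x::'n::{finite,linorder} phase. k * F x) x (\<lambda>i. k * a i) (\<lambda>i. k * b i)"
  using has_grad_mult[OF has_grad_const] by simp

lemma has_grad_inverse:
  assumes F: "has_grad F x a b" and nz: "F x \<noteq> 0"
  shows "has_grad (\<lambda>x::'n::{finite,linorder} phase. inverse (F x)) x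
           (\<lambda>i. - a i / (F x)\<^sup>2) (\<lambda>i. - b i / (F x)\<^sup>2)"
  unfolding has_grad_def
proof (rule has_derivative_eq_rhs[OF Deriv.has_derivative_inverse[OF nz F[unfolded has_grad_def]]])
  show "(\<lambda>h. - (inverse (F x) * (\<Sum>i=1..CARD('n). a i * qc h i + b i * pc h i) * inverse (F x))) =
        (\<lambda>h. \<Sum>i=1..CARD('n). - a i / (F x)\<^sup>2 * qc h i + - b i / (F x)\<^sup>2 * pc h i)"
    by (simp add: sum_distrib_left sum_negf[symmetric] field_simps power2_eq_square
        diff_divide_distrib add_divide_distrib)
qed

lemma has_grad_sum:
  "finite S \<Longrightarrow> (\<And>j. j \<in> S \<Longrightarrow> has_grad (F j) x (a j) (b j)) \<Longrightarrow>
   has_grad (\<lambda>x::'n::{finite,linorder} phase. \<Sum>j\<in>S. F j x) x (\<lambda>i. \<Sum>j\<in>S. a j i) (\<lambda>i. \<Sum>j\<in>S. b j i)"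
proof (induction S rule: finite_induct)
  case empty
  then show ?case by (simp add: has_grad_const)
next
  case (insert y S)
  then show ?case using has_grad_add[of "F y" x "a y" "b y"] by simp
qed

section \<open>Quadratic invariants of rotations\<close>

text \<open>Stated with \<open>Suc c\<close> because the simplifier normalises \<open>{1..n}\<close> to \<open>{Suc 0..n}\<close>.\<close>

lemma greaterThanAtMost_subset_atLeastAtMost_nat [simp]:
  fixes a b c d :: nat
  shows "{a<..b} \<subseteq> {Suc c..d} \<longleftrightarrow> (a < b \<longrightarrow> c \<le> a \<and> b \<le> d)"
  by (auto simp: subset_iff)

definition qsq_on :: "nat set \<Rightarrow> 'n::{finite,linorder} phase \<Rightarrow> real" where
  "qsq_on A x = (\<Sum>i\<in>A. (qc x i)\<^sup>2)"

definition psq_on :: "nat set \<Rightarrow> 'n::{finite,linorder} phase \<Rightarrow> real" where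
  "psq_on A x = (\<Sum>i\<in>A. (pc x i)\<^sup>2)"

definition qp_on :: "nat set \<Rightarrow> 'n::{finite,linorder} phase \<Rightarrow> real" where
  "qp_on A x = (\<Sum>i\<in>A. qc x i * pc x i)"

definition angmom_sq :: "nat set \<Rightarrow> 'n::{finite,linorder} phase \<Rightarrow> real" where
  "angmom_sq A x = qsq_on A x * psq_on A x - (qp_on A x)\<^sup>2"

lemma qsq_eq_qsq_on: "qsq = (qsq_on {1..CARD('n)} :: 'n::{finite,linorder} phase \<Rightarrow> real)"
  and psq_eq_psq_on: "psq = (psq_on {1..CARD('n)} :: 'n phase \<Rightarrow> real)"
  by (auto simp: fun_eq_iff qsq_def psq_def qsq_on_def psq_on_def)

lemma lagrange_identity:
  fixes u w :: "nat \<Rightarrow> real"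
  shows "(\<Sum>j\<in>{a<..b}. \<Sum>i\<in>{a<..<j}. (u i * w j - u j * w i)\<^sup>2)
    = (\<Sum>i\<in>{a<..b}. (u i)\<^sup>2) * (\<Sum>i\<in>{a<..b}. (w i)\<^sup>2) - (\<Sum>i\<in>{a<..b}. u i * w i)\<^sup>2"
proof (induction b)
  case 0
  then show ?case by simp
next
  case (Suc b)
  show ?case
  proof (cases "a \<le> b")
    case True
    have "{a<..Suc b} = insert (Suc b) {a<..b}" and "{a<..<Suc b} = {a<..b}"
      using True by auto
    moreover have "(\<Sum>i\<in>{a<..b}. (u i * w (Suc b) - u (Suc b) * w i)\<^sup>2)
       = (w (Suc b))\<^sup>2 * (\<Sum>i\<in>{a<..b}. (u i)\<^sup>2) - 2 * u (Suc b) * w (Suc b) * (\<Sum>i\<in>{a<..b}. u i * w i)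
         + (u (Suc b))\<^sup>2 * (\<Sum>i\<in>{a<..b}. (w i)\<^sup>2)"
      by (simp add: power2_diff sum.distrib sum_subtractf sum_distrib_left algebra_simps power2_eq_square)
    ultimately show ?thesis
      using Suc.IH by simp (simp add: algebra_simps power2_eq_square)
  next
    case False
    then show ?thesis by simp
  qed
qed

lemma Cup_eq_angmom_sq: "Cup m = angmom_sq {0<..m}"
proof
  fix x :: "'n::{finite,linorder} phase"
  have "Cup m x = (\<Sum>j\<in>{0<..m}. \<Sum>i\<in>{0<..<j}. (qc x i * pc x j - qc x j * pc x i)\<^sup>2)"
    unfolding Cup_def angmom_def by (rule sum.cong) (auto intro!: sum.cong)
  then show "Cup m x = angmom_sq {0<..m} x"
    by (simp add: lagrange_identity angmom_sq_def qsq_on_def psq_on_def qp_on_def)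
qed

lemma Cdown_eq_angmom_sq: "(Cdown m :: 'n::{finite,linorder} phase \<Rightarrow> real) =
    angmom_sq {CARD('n) - m<..CARD('n)}"
  by (simp add: fun_eq_iff Cdown_def angmom_def lagrange_identity angmom_sq_def qsq_on_def psq_on_def qp_on_def)

context
  fixes x :: "'n::{finite,linorder} phase"
begin

lemma has_grad_qsq_on:
  assumes "A \<subseteq> {1..CARD('n)}"
  shows "has_grad (qsq_on A) x (\<lambda>i. if i \<in> A then 2 * qc x i else 0) (\<lambda>i. 0)"
proof -
  have "finite A" using assms finite_subset by blast
  have eq: "qsq_on A = (\<lambda>x. \<Sum>j\<in>A. qc x j * qc x j)"
    by (simp add: fun_eq_iff qsq_on_def power2_eq_square)
  have "has_grad (\<lambda>x. \<Sum>j\<in>A. qc x j * qc x j) x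
     (\<lambda>i. \<Sum>j\<in>A. qc x j * (if i = j then 1 else 0) + qc x j * (if i = j then 1 else 0))
     (\<lambda>i. \<Sum>j\<in>A. qc x j * 0 + qc x j * 0)"
    using assms by (intro has_grad_sum \<open>finite A\<close> has_grad_mult has_grad_qc) auto
  then show ?thesis
    unfolding eq
    by (rule has_grad_cong) (simp_all add: mult_if_one_zero sum.delta \<open>finite A\<close> sum_distrib_left[symmetric])
qed

lemma has_grad_psq_on:
  assumes "A \<subseteq> {1..CARD('n)}"
  shows "has_grad (psq_on A) x (\<lambda>i. 0) (\<lambda>i. if i \<in> A then 2 * pc x i else 0)"
proof -
  have "finite A" using assms finite_subset by blast
  have eq: "psq_on A = (\<lambda>x. \<Sum>j\<in>A. pc x j * pc x j)"
    by (simp add: fun_eq_iff psq_on_def power2_eq_square)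
  have "has_grad (\<lambda>x. \<Sum>j\<in>A. pc x j * pc x j) x
     (\<lambda>i. \<Sum>j\<in>A. pc x j * 0 + pc x j * 0)
     (\<lambda>i. \<Sum>j\<in>A. pc x j * (if i = j then 1 else 0) + pc x j * (if i = j then 1 else 0))"
    using assms by (intro has_grad_sum \<open>finite A\<close> has_grad_mult has_grad_pc) auto
  then show ?thesis
    unfolding eq
    by (rule has_grad_cong) (simp_all add: mult_if_one_zero sum.delta \<open>finite A\<close> sum_distrib_left[symmetric])
qed

lemma has_grad_qp_on:
  assumes "A \<subseteq> {1..CARD('n)}"
  shows "has_grad (qp_on A) x (\<lambda>i. if i \<in> A then pc x i else 0) (\<lambda>i. if i \<in> A then qc x i else 0)"
proof -
  have "finite A" using assms finite_subset by blast
  have eq: "qp_on A = (\<lambda>x. \<Sum>j\<in>A. qc x j * pc x j)"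
    by (simp add: fun_eq_iff qp_on_def power2_eq_square)
  have "has_grad (\<lambda>x. \<Sum>j\<in>A. qc x j * pc x j) x
     (\<lambda>i. \<Sum>j\<in>A. qc x j * 0 + pc x j * (if i = j then 1 else 0))
     (\<lambda>i. \<Sum>j\<in>A. qc x j * (if i = j then 1 else 0) + pc x j * 0)"
    using assms by (intro has_grad_sum \<open>finite A\<close> has_grad_mult has_grad_qc has_grad_pc) auto
  then show ?thesis
    unfolding eq
    by (rule has_grad_cong) (simp_all add: mult_if_one_zero sum.delta \<open>finite A\<close> sum_distrib_left[symmetric])
qed

lemma has_grad_angmom_sq:
  assumes "A \<subseteq> {1..CARD('n)}"
  shows "has_grad (angmom_sq A) x
    (\<lambda>i. if i \<in> A then 2 * (psq_on A x * qc x i - qp_on A x * pc x i) else 0)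
    (\<lambda>i. if i \<in> A then 2 * (qsq_on A x * pc x i - qp_on A x * qc x i) else 0)"
proof -
  have eq: "angmom_sq A = (\<lambda>x. qsq_on A x * psq_on A x - qp_on A x * qp_on A x)"
    by (auto simp: angmom_sq_def power2_eq_square fun_eq_iff)
  show ?thesis
    unfolding eq
    by (rule has_grad_cong[OF has_grad_diff[OF has_grad_mult[OF has_grad_qsq_on has_grad_psq_on]
                                              has_grad_mult[OF has_grad_qp_on has_grad_qp_on]]])
       (use assms in \<open>auto simp: algebra_simps\<close>)
qed

lemma has_grad_Ham:
  fixes lam \<omega> :: real
  defines "D \<equiv> 1 + lam * qsq x"
  assumes "D \<noteq> 0"
  shows "has_grad (Ham lam \<omega>) x (\<lambda>i. (\<omega>\<^sup>2 - lam * psq x) / D\<^sup>2 * qc x i) (\<lambda>i. pc x i / D)"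
proof -
  let ?U = "{1..CARD('n)}"
  have eq: "Ham lam \<omega> = (\<lambda>x::'n phase.
              (psq_on ?U x + \<omega>\<^sup>2 * qsq_on ?U x) * inverse (2 * (1 + lam * qsq_on ?U x)))"
    by (auto simp: fun_eq_iff Ham_def qsq_eq_qsq_on psq_eq_psq_on
        add_divide_distrib divide_inverse distrib_right)
  have D: "D = 1 + lam * qsq_on ?U x" and nz: "2 * (1 + lam * qsq_on ?U x) \<noteq> 0"
    using assms by (simp_all add: qsq_eq_qsq_on)
  note num = has_grad_add[OF has_grad_psq_on has_grad_cmult[OF has_grad_qsq_on]]
  note den = has_grad_cmult[OF has_grad_add[OF has_grad_const has_grad_cmult[OF has_grad_qsq_on]]]
  show ?thesis
    unfolding eq
    apply (rule has_grad_cong[OF has_grad_mult[OF num has_grad_inverse[OF den nz]]])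
    using assms(2) unfolding D[symmetric] psq_eq_psq_on
    by (auto simp: field_simps power2_eq_square) (simp add: D algebra_simps)
qed

end

section \<open>Poisson brackets\<close>

lemma sum_if_mem_subset: "A \<subseteq> B \<Longrightarrow> finite B \<Longrightarrow> (\<Sum>i\<in>B. if i \<in> A then f i else 0) = sum f A"
  by (simp add: sum.If_cases Int_absorb1)

lemma Fradkin_factor:
  fixes lam \<omega> :: real
  assumes "1 + lam * qsq x \<noteq> 0"
  shows "2 * lam * Ham lam \<omega> x - \<omega>\<^sup>2 = (lam * psq x - \<omega>\<^sup>2) / (1 + lam * qsq x)"
proof -
  define D where "D = 1 + lam * qsq x"
  have "2 * lam * Ham lam \<omega> x - \<omega>\<^sup>2 = (lam * psq x + lam * \<omega>\<^sup>2 * qsq x - \<omega>\<^sup>2 * D) / D"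
    using assms unfolding Ham_def D_def[symmetric] by (simp add: field_simps)
  also have "\<dots> = (lam * psq x - \<omega>\<^sup>2) / D"
    by (simp add: D_def algebra_simps)
  finally show ?thesis by (simp add: D_def)
qed

context
  fixes x :: "'n::{finite,linorder} phase"
begin

lemma has_grad_Frad:
  fixes lam \<omega> :: real
  defines "D \<equiv> 1 + lam * qsq x"
  defines "\<alpha> \<equiv> (\<omega>\<^sup>2 - lam * psq x) / D\<^sup>2"
  assumes D: "D \<noteq> 0" and ij: "i \<in> {1..CARD('n)}" "j \<in> {1..CARD('n)}"
  shows "has_grad (Frad lam \<omega> i j) x
    (\<lambda>k. \<alpha> * (D * ((if k = i then qc x j else 0) + (if k = j then qc x i else 0))
              - 2 * lam * qc x k * qc x i * qc x j))
    (\<lambda>k. (if k = i then pc x j else 0) + (if k = j then pc x i else 0)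
          - 2 * lam * pc x k * qc x i * qc x j / D)"
proof -
  have eq: "Frad lam \<omega> i j = (\<lambda>x. pc x i * pc x j - (2 * lam * Ham lam \<omega> x - \<omega>\<^sup>2) * qc x i * qc x j)"
    by (simp add: fun_eq_iff Frad_def)
  have "- \<alpha> * D = (lam * psq x - \<omega>\<^sup>2) / D"
    using D by (simp add: \<alpha>_def power2_eq_square field_simps)
  then have K: "2 * lam * Ham lam \<omega> x - \<omega>\<^sup>2 = - \<alpha> * D"
    using Fradkin_factor[of lam x \<omega>, folded D_def] D by simp
  note factor = has_grad_diff[OF has_grad_cmult[OF has_grad_Ham] has_grad_const]
  show ?thesis
    unfolding eq
    apply (rule has_grad_cong[OF has_grad_diff[OF has_grad_mult[OF has_grad_pc has_grad_pc]
          has_grad_mult[OF has_grad_mult[OF factor has_grad_qc] has_grad_qc]]])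
    apply (simp_all only: K flip: D_def \<alpha>_def)
    using D ij by (auto simp: field_simps)
qed

text \<open>\<open>C\<^sub>A\<close> is invariant under rotations of the \<open>A\<close>-coordinates; the hypotheses on the gradient
  of \<open>G\<close> hold for \<open>\<H>\<^sub>\<lambda>\<close> (with \<open>\<gamma> = 0\<close>) and for \<open>C\<^sub>B\<close> with \<open>A \<subseteq> B\<close> (with \<open>\<gamma> = -2 S\<^sub>B\<close>).\<close>

lemma poisson_angmom_sq_radial:
  assumes A: "A \<subseteq> {1..CARD('n)}" and G: "has_grad G x c d"
    and c: "\<And>i. i \<in> A \<Longrightarrow> c i = \<alpha> * qc x i + \<gamma> * pc x i"
    and d: "\<And>i. i \<in> A \<Longrightarrow> d i = \<beta> * pc x i + \<gamma> * qc x i"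
  shows "poisson (angmom_sq A) G x = 0"
proof -
  let ?Q = "qsq_on A x" and ?P = "psq_on A x" and ?S = "qp_on A x"
  have "poisson (angmom_sq A) G x =
      (\<Sum>i\<in>A. 2 * (?P * qc x i - ?S * pc x i) * d i - 2 * (?Q * pc x i - ?S * qc x i) * c i)"
    unfolding poisson_has_grad[OF has_grad_angmom_sq[OF A] G]
    by (subst sum_if_mem_subset[OF A finite_atLeastAtMost, symmetric]) (auto intro!: sum.cong)
  also have "\<dots> = (\<Sum>i\<in>A. 2 * (?P * \<beta> - ?Q * \<alpha>) * (qc x i * pc x i)
                       + 2 * (?P * \<gamma> + ?S * \<alpha>) * (qc x i)\<^sup>2 - 2 * (?S * \<beta> + ?Q * \<gamma>) * (pc x i)\<^sup>2)"
    by (rule sum.cong) (simp_all add: c d algebra_simps power2_eq_square)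
  also have "\<dots> = 2 * (?P * \<beta> - ?Q * \<alpha>) * ?S + 2 * (?P * \<gamma> + ?S * \<alpha>) * ?Q - 2 * (?S * \<beta> + ?Q * \<gamma>) * ?P"
    by (simp add: sum.distrib sum_subtractf sum_distrib_left qp_on_def qsq_on_def psq_on_def)
  also have "\<dots> = 0"
    by (simp add: algebra_simps)
  finally show ?thesis .
qed

lemma poisson_angmom_sq_Ham:
  fixes lam \<omega> :: real
  assumes "A \<subseteq> {1..CARD('n)}" and "1 + lam * qsq x \<noteq> 0"
  shows "poisson (angmom_sq A) (Ham lam \<omega>) x = 0"
  using assms
  by (intro poisson_angmom_sq_radial[OF _ has_grad_Ham, where \<gamma> = 0
        and \<alpha> = "(\<omega>\<^sup>2 - lam * psq x) / (1 + lam * qsq x)\<^sup>2" and \<beta> = "1 / (1 + lam * qsq x)"]) auto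

lemma poisson_angmom_sq_subset:
  assumes "A \<subseteq> B" and "B \<subseteq> {1..CARD('n)}"
  shows "poisson (angmom_sq A) (angmom_sq B) x = 0"
  using assms
  by (intro poisson_angmom_sq_radial[OF _ has_grad_angmom_sq, where \<gamma> = "- 2 * qp_on B x"])
     (auto simp: algebra_simps)

lemma poisson_Frad_Ham:
  fixes lam \<omega> :: real
  assumes nz: "1 + lam * qsq x \<noteq> 0" and ij: "i \<in> {1..CARD('n)}" "j \<in> {1..CARD('n)}"
  shows "poisson (Frad lam \<omega> i j) (Ham lam \<omega>) x = 0"
proof -
  define D where "D = 1 + lam * qsq x"
  define \<alpha> where "\<alpha> = (\<omega>\<^sup>2 - lam * psq x) / D\<^sup>2"
  note grads = has_grad_Frad[OF nz ij, where \<omega> = \<omega>, folded D_def, folded \<alpha>_def]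
    has_grad_Ham[OF nz, where \<omega> = \<omega>, folded D_def, folded \<alpha>_def]
  have "poisson (Frad lam \<omega> i j) (Ham lam \<omega>) x =
      (\<Sum>k=1..CARD('n). (if k = i then \<alpha> * (qc x j * pc x i - pc x j * qc x i) else 0)
                       + (if k = j then \<alpha> * (qc x i * pc x j - pc x i * qc x j) else 0))"
    unfolding poisson_has_grad[OF grads]
    using nz by (intro sum.cong) (auto simp: D_def[symmetric] field_simps)
  also have "\<dots> = 0"
    using ij by (simp add: sum.distrib algebra_simps)
  finally show ?thesis .
qed

lemma poisson_Frad_diag:
  fixes lam \<omega> :: real
  assumes nz: "1 + lam * qsq x \<noteq> 0" and ij: "i \<in> {1..CARD('n)}" "j \<in> {1..CARD('n)}"
  shows "poisson (Frad lam \<omega> i i) (Frad lam \<omega> j j) x = 0"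
proof (cases "i = j")
  case True
  then show ?thesis by (simp add: poisson_self)
next
  case False
  define D where "D = 1 + lam * qsq x"
  define \<alpha> where "\<alpha> = (\<omega>\<^sup>2 - lam * psq x) / D\<^sup>2"
  note grads = has_grad_Frad[OF nz ij(1,1), where \<omega> = \<omega>, folded D_def, folded \<alpha>_def]
    has_grad_Frad[OF nz ij(2,2), where \<omega> = \<omega>, folded D_def, folded \<alpha>_def]
  show ?thesis
    unfolding poisson_has_grad[OF grads]
    using nz False by (intro sum.neutral) (auto simp: D_def[symmetric] field_simps)
qed

lemma Ham_eq_half_sum_Frad:
  fixes lam \<omega> :: real
  assumes nz: "1 + lam * qsq x \<noteq> 0"
  shows "Ham lam \<omega> x = (1/2) * (\<Sum>i=1..CARD('n). Frad lam \<omega> i i x)"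
proof -
  define D where "D = 1 + lam * qsq x"
  have "(\<Sum>i=1..CARD('n). Frad lam \<omega> i i x) = psq x - (2 * lam * Ham lam \<omega> x - \<omega>\<^sup>2) * qsq x"
    by (simp add: Frad_def sum_subtractf sum.distrib sum_distrib_left psq_def qsq_def
        power2_eq_square algebra_simps)
  also have "\<dots> = (psq x * D - (lam * psq x - \<omega>\<^sup>2) * qsq x) / D"
    using nz unfolding Fradkin_factor[OF nz, folded D_def] D_def[symmetric] by (simp add: field_simps)
  also have "\<dots> = 2 * Ham lam \<omega> x"
    using nz by (simp add: Ham_def D_def[symmetric] field_simps) (simp add: D_def algebra_simps)
  finally show ?thesis by simp
qed

end

section \<open>Derivatives along test vectors\<close>

definition dilation :: "'n::{finite,linorder} phase \<Rightarrow> 'n phase" where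
  "dilation x = phase_of (qc x) (\<lambda>i. - pc x i)"

definition shear :: "'n::{finite,linorder} phase \<Rightarrow> 'n phase" where
  "shear x = phase_of (\<lambda>i. 0) (qc x)"

definition unit_p :: "nat \<Rightarrow> 'n::{finite,linorder} phase" where
  "unit_p j = phase_of (\<lambda>i. 0) (\<lambda>i. if i = j then 1 else 0)"

definition rotation :: "'n::{finite,linorder} phase \<Rightarrow> nat \<Rightarrow> nat \<Rightarrow> 'n phase" where
  "rotation x k l = phase_of (\<lambda>i. if i = k then qc x l else if i = l then - qc x k else 0)
                             (\<lambda>i. if i = k then pc x l else if i = l then - pc x k else 0)"

definition dp_angmom_sq_half :: "nat set \<Rightarrow> nat \<Rightarrow> 'n::{finite,linorder} phase \<Rightarrow> real" where
  "dp_angmom_sq_half A j x = qsq_on A x * pc x j - qp_on A x * qc x j"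

definition rotation_coeff :: "nat set \<Rightarrow> nat \<Rightarrow> nat \<Rightarrow> 'n::{finite,linorder} phase \<Rightarrow> real" where
  "rotation_coeff A k l x = psq_on A x * qc x k * qc x l + qsq_on A x * pc x k * pc x l
                             - qp_on A x * (pc x k * qc x l + qc x k * pc x l)"

definition dilation_Ham_numer :: "real \<Rightarrow> real \<Rightarrow> 'n::{finite,linorder} phase \<Rightarrow> real" where
  "dilation_Ham_numer lam \<omega> x = \<omega>\<^sup>2 * qsq x - psq x - 2 * lam * psq x * qsq x"

context
  fixes x :: "'n::{finite,linorder} phase"
begin

lemma deriv_angmom_sq:
  assumes A: "A \<subseteq> {1..CARD('n)}"
  shows "frechet_derivative (angmom_sq A) (at x) (phase_of u w) =
    (\<Sum>i\<in>A. 2 * (psq_on A x * qc x i - qp_on A x * pc x i) * u i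
        + 2 * (qsq_on A x * pc x i - qp_on A x * qc x i) * w i)"
  unfolding frechet_derivative_has_grad[OF has_grad_angmom_sq[OF A]]
  by (subst sum_if_mem_subset[OF A finite_atLeastAtMost, symmetric]) (auto intro!: sum.cong)

lemma deriv_angmom_sq_dilation:
  assumes "A \<subseteq> {1..CARD('n)}"
  shows "frechet_derivative (angmom_sq A) (at x) (dilation x) = 0"
proof -
  have "frechet_derivative (angmom_sq A) (at x) (dilation x) =
      (\<Sum>i\<in>A. 2 * psq_on A x * (qc x i)\<^sup>2 - 2 * qsq_on A x * (pc x i)\<^sup>2)"
    unfolding dilation_def deriv_angmom_sq[OF assms]
    using assms by (intro sum.cong) (auto simp: algebra_simps power2_eq_square)
  also have "\<dots> = 0"
    by (simp only: sum_subtractf sum_distrib_left[symmetric] qsq_on_def[symmetric] psq_on_def[symmetric]) simp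
  finally show ?thesis .
qed

lemma deriv_angmom_sq_shear:
  assumes "A \<subseteq> {1..CARD('n)}"
  shows "frechet_derivative (angmom_sq A) (at x) (shear x) = 0"
proof -
  have "frechet_derivative (angmom_sq A) (at x) (shear x) =
      (\<Sum>i\<in>A. 2 * qsq_on A x * (qc x i * pc x i) - 2 * qp_on A x * (qc x i)\<^sup>2)"
    unfolding shear_def deriv_angmom_sq[OF assms]
    using assms by (intro sum.cong) (auto simp: algebra_simps power2_eq_square)
  also have "\<dots> = 0"
    by (simp only: sum_subtractf sum_distrib_left[symmetric] qsq_on_def[symmetric] qp_on_def[symmetric]) simp
  finally show ?thesis .
qed

lemma deriv_angmom_sq_unit_p:
  assumes "A \<subseteq> {1..CARD('n)}"
  shows "frechet_derivative (angmom_sq A) (at x) (unit_p j) =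
      (if j \<in> A then 2 * dp_angmom_sq_half A j x else 0)"
  unfolding unit_p_def deriv_angmom_sq[OF assms] dp_angmom_sq_half_def
  using assms by (simp add: mult_if_one_zero sum.delta' finite_subset)

lemma deriv_angmom_sq_rotation:
  assumes A: "A \<subseteq> {1..CARD('n)}" and "k \<noteq> l"
  shows "frechet_derivative (angmom_sq A) (at x) (rotation x k l) =
    (if k \<in> A then 2 * rotation_coeff A k l x else 0) - (if l \<in> A then 2 * rotation_coeff A k l x else 0)"
proof -
  have "frechet_derivative (angmom_sq A) (at x) (rotation x k l) =
      (\<Sum>i\<in>A. (if i = k then 2 * rotation_coeff A k l x else 0)
          - (if i = l then 2 * rotation_coeff A k l x else 0))"
    unfolding rotation_def deriv_angmom_sq[OF A]
    by (rule sum.cong) (use assms in \<open>auto simp: rotation_coeff_def algebra_simps\<close>)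
  then show ?thesis
    using A by (simp add: sum_subtractf sum.delta' finite_subset)
qed

lemma deriv_Ham:
  fixes lam \<omega> :: real
  assumes "1 + lam * qsq x \<noteq> 0"
  shows "frechet_derivative (Ham lam \<omega>) (at x) (phase_of u w) =
    (\<Sum>i=1..CARD('n). (\<omega>\<^sup>2 - lam * psq x) / (1 + lam * qsq x)\<^sup>2 * qc x i * u i
        + pc x i / (1 + lam * qsq x) * w i)"
  unfolding frechet_derivative_has_grad[OF has_grad_Ham[OF assms]] ..

lemma deriv_Ham_dilation:
  fixes lam \<omega> :: real
  assumes "1 + lam * qsq x \<noteq> 0"
  shows "frechet_derivative (Ham lam \<omega>) (at x) (dilation x) = dilation_Ham_numer lam \<omega> x / (1 + lam * qsq x)\<^sup>2"
proof -
  define D where "D = 1 + lam * qsq x"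
  have "frechet_derivative (Ham lam \<omega>) (at x) (dilation x) =
      (\<Sum>i=1..CARD('n). (\<omega>\<^sup>2 - lam * psq x) / D\<^sup>2 * (qc x i)\<^sup>2 - 1 / D * (pc x i)\<^sup>2)"
    unfolding dilation_def deriv_Ham[OF assms] D_def[symmetric]
    by (intro sum.cong) (auto simp: power2_eq_square)
  also have "\<dots> = (\<omega>\<^sup>2 - lam * psq x) / D\<^sup>2 * qsq x - 1 / D * psq x"
    by (simp only: sum_subtractf sum_distrib_left[symmetric] qsq_def[symmetric] psq_def[symmetric])
  also have "\<dots> = dilation_Ham_numer lam \<omega> x / D\<^sup>2"
    using assms unfolding D_def[symmetric] dilation_Ham_numer_def
    by (simp add: field_simps power2_eq_square) (simp add: D_def algebra_simps)
  finally show ?thesis by (simp add: D_def)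
qed

lemma deriv_Ham_shear:
  fixes lam \<omega> :: real
  assumes "1 + lam * qsq x \<noteq> 0"
  shows "frechet_derivative (Ham lam \<omega>) (at x) (shear x) = qp_on {1..CARD('n)} x / (1 + lam * qsq x)"
  unfolding shear_def deriv_Ham[OF assms] qp_on_def
  by (simp add: sum_divide_distrib algebra_simps)

lemma deriv_Frad_diag:
  fixes lam \<omega> :: real
  defines "D \<equiv> 1 + lam * qsq x"
  defines "\<alpha> \<equiv> (\<omega>\<^sup>2 - lam * psq x) / D\<^sup>2"
  assumes D: "D \<noteq> 0" and i: "i \<in> {1..CARD('n)}"
  shows "frechet_derivative (Frad lam \<omega> i i) (at x) (phase_of u w) =
    2 * \<alpha> * D * qc x i * u i + 2 * pc x i * w i
    - 2 * lam * (qc x i)\<^sup>2 * (\<Sum>k=1..CARD('n). \<alpha> * qc x k * u k + pc x k * w k / D)"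
proof -
  have "frechet_derivative (Frad lam \<omega> i i) (at x) (phase_of u w) =
      (\<Sum>k=1..CARD('n). (if k = i then 2 * \<alpha> * D * qc x i * u i + 2 * pc x i * w i else 0)
         - 2 * lam * (qc x i)\<^sup>2 * (\<alpha> * qc x k * u k + pc x k * w k / D))"
    unfolding frechet_derivative_has_grad[OF has_grad_Frad[OF D[unfolded D_def] i i, where \<omega> = \<omega>,
          folded D_def, folded \<alpha>_def]]
    by (intro sum.cong) (auto simp: algebra_simps power2_eq_square)
  then show ?thesis
    using i by (simp add: sum_subtractf sum_distrib_left[symmetric])
qed

end

section \<open>Independence of differentials\<close>

text \<open>Names for the integrals, so that test vectors and ranks can be assigned to them by cases.\<close>

datatype integral_label = Hamiltonian | Up nat | Down nat | Fradkin nat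

fun integral_of :: "real \<Rightarrow> real \<Rightarrow> integral_label \<Rightarrow> 'n::{finite,linorder} phase \<Rightarrow> real" where
  "integral_of lam \<omega> Hamiltonian = Ham lam \<omega>"
| "integral_of lam \<omega> (Up m) = Cup m"
| "integral_of lam \<omega> (Down m) = Cdown m"
| "integral_of lam \<omega> (Fradkin i) = Frad lam \<omega> i i"

lemma Cup_differentiable: "m \<le> CARD('n) \<Longrightarrow> Cup m differentiable (at (x :: 'n::{finite,linorder} phase))"
  unfolding Cup_eq_angmom_sq by (rule has_grad_differentiable[OF has_grad_angmom_sq]) auto

lemma Cdown_differentiable: "Cdown m differentiable (at (x :: 'n::{finite,linorder} phase))"
  unfolding Cdown_eq_angmom_sq by (rule has_grad_differentiable[OF has_grad_angmom_sq]) auto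

lemma differentials_indep_Ham_Cup:
  fixes lam \<omega> :: real and x :: "'n::{finite,linorder} phase"
  assumes nz: "1 + lam * qsq x \<noteq> 0" and H: "dilation_Ham_numer lam \<omega> x \<noteq> 0"
    and C: "\<And>m. m \<in> {2..CARD('n)} \<Longrightarrow> dp_angmom_sq_half {0<..m} m x \<noteq> 0"
  shows "differentials_indep (Ham lam \<omega> # map Cup [2..<CARD('n)+1]) x"
proof -
  let ?ls = "Hamiltonian # map Up [2..<CARD('n)+1]"
  let ?v = "\<lambda>a. case a of Up m \<Rightarrow> unit_p m | _ \<Rightarrow> dilation x"
  let ?r = "\<lambda>a. case a of Up m \<Rightarrow> CARD('n) + 1 - m | _ \<Rightarrow> 0"
  have "differentials_indep (map (integral_of lam \<omega>) ?ls) x"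
  proof (rule differentials_indep_triangular[where v = ?v and r = ?r])
    show "distinct ?ls"
      by (auto simp: distinct_map inj_on_def)
    show "integral_of lam \<omega> a differentiable (at x)" if "a \<in> set ?ls" for a
      using that by (auto simp: Cup_differentiable has_grad_differentiable[OF has_grad_Ham[OF nz]])
    show "frechet_derivative (integral_of lam \<omega> a) (at x) (?v a) \<noteq> 0" if "a \<in> set ?ls" for a
      using that nz H C by (auto simp: Cup_eq_angmom_sq deriv_Ham_dilation deriv_angmom_sq_unit_p)
    show "frechet_derivative (integral_of lam \<omega> b) (at x) (?v a) = 0"
      if "a \<in> set ?ls" "b \<in> set ?ls" "b \<noteq> a" "?r a \<le> ?r b" for a b
      using that by (auto simp: Cup_eq_angmom_sq deriv_angmom_sq_dilation deriv_angmom_sq_unit_p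
          split: if_splits)
  qed
  then show ?thesis by (simp add: comp_def)
qed

lemma differentials_indep_Ham_Cdown:
  fixes lam \<omega> :: real and x :: "'n::{finite,linorder} phase"
  assumes nz: "1 + lam * qsq x \<noteq> 0" and H: "dilation_Ham_numer lam \<omega> x \<noteq> 0"
    and C: "\<And>m. m \<in> {2..CARD('n)} \<Longrightarrow>
              dp_angmom_sq_half {CARD('n) - m<..CARD('n)} (CARD('n) - m + 1) x \<noteq> 0"
  shows "differentials_indep (Ham lam \<omega> # map Cdown [2..<CARD('n)+1]) x"
proof -
  let ?ls = "Hamiltonian # map Down [2..<CARD('n)+1]"
  let ?v = "\<lambda>a. case a of Down m \<Rightarrow> unit_p (CARD('n) - m + 1) | _ \<Rightarrow> dilation x"
  let ?r = "\<lambda>a. case a of Down m \<Rightarrow> CARD('n) + 1 - m | _ \<Rightarrow> 0"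
  have "differentials_indep (map (integral_of lam \<omega>) ?ls) x"
  proof (rule differentials_indep_triangular[where v = ?v and r = ?r])
    show "distinct ?ls"
      by (auto simp: distinct_map inj_on_def)
    show "integral_of lam \<omega> a differentiable (at x)" if "a \<in> set ?ls" for a
      using that by (auto simp: Cdown_differentiable has_grad_differentiable[OF has_grad_Ham[OF nz]])
    show "frechet_derivative (integral_of lam \<omega> a) (at x) (?v a) \<noteq> 0" if a: "a \<in> set ?ls" for a
    proof -
      consider "a = Hamiltonian" | m where "a = Down m" "m \<in> {2..CARD('n)}"
        using a by auto
      then show ?thesis
      proof cases
        case 1
        then show ?thesis using nz H by (simp add: deriv_Ham_dilation)
      next
        case 2
        then show ?thesis using C[of m] by (auto simp: Cdown_eq_angmom_sq deriv_angmom_sq_unit_p)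
      qed
    qed
    show "frechet_derivative (integral_of lam \<omega> b) (at x) (?v a) = 0"
      if "a \<in> set ?ls" "b \<in> set ?ls" "b \<noteq> a" "?r a \<le> ?r b" for a b
      using that by (auto simp: Cdown_eq_angmom_sq deriv_angmom_sq_dilation deriv_angmom_sq_unit_p
          split: if_splits)
  qed
  then show ?thesis by (simp add: comp_def)
qed

lemma deriv_Frad_diag_unit_p:
  fixes lam \<omega> :: real and x :: "'n::{finite,linorder} phase"
  assumes nz: "1 + lam * qsq x \<noteq> 0" and i: "i \<in> {1..CARD('n)}" and j: "j \<in> {1..CARD('n)}"
  shows "frechet_derivative (Frad lam \<omega> i i) (at x) (unit_p j) =
           (if j = i then 2 * pc x i else 0) - 2 * lam * (qc x i)\<^sup>2 * pc x j / (1 + lam * qsq x)"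
  unfolding unit_p_def deriv_Frad_diag[OF nz i]
  using j by (simp add: sum_divide_distrib[symmetric] mult_if_one_zero sum.delta')

text \<open>Testing with \<open>\<partial>/\<partial>p\<^sub>j\<close> forces every coefficient to equal \<open>\<lambda>s/(1 + \<lambda>Q)\<close> with
  \<open>s = \<Sigma> c\<^sub>i q\<^sub>i\<^sup>2\<close>; substituting back gives \<open>s (1 + \<lambda>Q) = \<lambda>s Q\<close>, so \<open>s = 0\<close>.\<close>

lemma Frad_diag_combination_trivial:
  fixes lam \<omega> :: real and x :: "'n::{finite,linorder} phase" and c :: "nat \<Rightarrow> real"
  assumes nz: "1 + lam * qsq x \<noteq> 0" and p: "\<And>j. j \<in> {1..CARD('n)} \<Longrightarrow> pc x j \<noteq> 0"
    and comb: "\<And>v. (\<Sum>i=1..CARD('n). c i * frechet_derivative (Frad lam \<omega> i i) (at x) v) = 0"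
    and k: "k \<in> {1..CARD('n)}"
  shows "c k = 0"
proof -
  let ?U = "{1..CARD('n)}" and ?D = "1 + lam * qsq x"
  define s where "s = (\<Sum>i\<in>?U. c i * (qc x i)\<^sup>2)"
  have c_eq: "c j = lam * s / ?D" if j: "j \<in> ?U" for j
  proof -
    have "(\<Sum>i\<in>?U. c i * frechet_derivative (Frad lam \<omega> i i) (at x) (unit_p j)) =
          2 * pc x j * c j - 2 * lam * pc x j / ?D * s"
      using j by (simp add: deriv_Frad_diag_unit_p[OF nz _ j] right_diff_distrib sum_subtractf
                    sum_distrib_left s_def if_distrib[of "\<lambda>z. _ * z"] sum.delta' algebra_simps cong: if_cong)
    also have "\<dots> = 2 * (pc x j * (c j - lam * s / ?D))"
      using nz by (simp add: field_simps)
    finally have "pc x j * (c j - lam * s / ?D) = 0"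
      using comb[of "unit_p j"] by simp
    then show ?thesis
      using p[OF j] by simp
  qed
  have "s = (\<Sum>i\<in>?U. lam * s / ?D * (qc x i)\<^sup>2)"
    unfolding s_def by (rule sum.cong) (simp_all add: c_eq[unfolded s_def])
  also have "\<dots> = lam * s / ?D * qsq x"
    by (simp add: qsq_def sum_distrib_left)
  finally have "s = 0"
    using nz by (simp add: field_simps)
  then show ?thesis
    using c_eq[OF k] by simp
qed

lemma differentials_indep_Frad:
  fixes lam \<omega> :: real and x :: "'n::{finite,linorder} phase"
  assumes nz: "1 + lam * qsq x \<noteq> 0" and p: "\<And>j. j \<in> {1..CARD('n)} \<Longrightarrow> pc x j \<noteq> 0"
  shows "differentials_indep (map (\<lambda>i. Frad lam \<omega> i i) [1..<CARD('n)+1]) x"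
  unfolding differentials_indep_def
proof (intro conjI allI impI)
  show "map (\<lambda>i. Frad lam \<omega> i i) [1..<CARD('n)+1] ! k differentiable (at x)"
    if "k < length (map (\<lambda>i. Frad lam \<omega> i i) [1..<CARD('n)+1])" for k
    using that has_grad_differentiable[OF has_grad_Frad[OF nz, where i = "Suc k" and j = "Suc k"]]
    by (simp del: upt_Suc)
  fix c :: "nat \<Rightarrow> real" and k
  assume h: "\<forall>v. (\<Sum>k<length (map (\<lambda>i. Frad lam \<omega> i i) [1..<CARD('n)+1]).
                 c k * frechet_derivative (map (\<lambda>i. Frad lam \<omega> i i) [1..<CARD('n)+1] ! k) (at x) v) = 0"
  have comb: "(\<Sum>i=1..CARD('n). c (i - 1) * frechet_derivative (Frad lam \<omega> i i) (at x) v) = 0" for v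
    using h[rule_format, of v] by (simp del: upt_Suc add: sum.atLeast1_atMost_eq nth_upt add.commute)
  assume "k < length (map (\<lambda>i. Frad lam \<omega> i i) [1..<CARD('n)+1])"
  then show "c k = 0"
    using Frad_diag_combination_trivial[OF nz p comb, where k = "k + 1"] by simp
qed

definition HI_det_numer :: "real \<Rightarrow> real \<Rightarrow> nat \<Rightarrow> 'n::{finite,linorder} phase \<Rightarrow> real" where
  "HI_det_numer lam \<omega> i x =
     (let Q = qsq x; P = psq x; S = qp_on {1..CARD('n)} x; D = 1 + lam * Q; W = \<omega>\<^sup>2 - lam * P;
          q = qc x i; p = pc x i in
      S * (2 * W * D * q\<^sup>2 - 2 * D\<^sup>2 * p\<^sup>2 - 2 * lam * q\<^sup>2 * (W * Q - P * D))
      - dilation_Ham_numer lam \<omega> x * (2 * D * p * q - 2 * lam * q\<^sup>2 * S))"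

definition rotation_det :: "nat \<Rightarrow> 'n::{finite,linorder} phase \<Rightarrow> real" where
  "rotation_det m x =
     rotation_coeff {0<..m} 1 (m+1) x * rotation_coeff {m<..CARD('n)} m (m+1) x
     - rotation_coeff {0<..m} m (m+1) x * rotation_coeff {m<..CARD('n)} 1 (m+1) x"

definition rotation_pair :: "'n::{finite,linorder} phase \<Rightarrow> nat \<Rightarrow> 'n phase" where
  "rotation_pair x m =
     rotation_coeff {m<..CARD('n)} m (m+1) x *\<^sub>R rotation x 1 (m+1)
     - rotation_coeff {m<..CARD('n)} 1 (m+1) x *\<^sub>R rotation x m (m+1)"

context
  fixes x :: "'n::{finite,linorder} phase"
begin

lemma HI_det_eq:
  fixes lam \<omega> :: real
  assumes nz: "1 + lam * qsq x \<noteq> 0" and i: "i \<in> {1..CARD('n)}"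
  shows "frechet_derivative (Ham lam \<omega>) (at x) (shear x)
      * frechet_derivative (Frad lam \<omega> i i) (at x) (dilation x)
       - frechet_derivative (Ham lam \<omega>) (at x) (dilation x)
           * frechet_derivative (Frad lam \<omega> i i) (at x) (shear x)
       = HI_det_numer lam \<omega> i x / (1 + lam * qsq x) ^ 3"
proof -
  define D where "D = 1 + lam * qsq x"
  have D: "D \<noteq> 0" using nz by (simp add: D_def)
  have sh: "frechet_derivative (Frad lam \<omega> i i) (at x) (shear x) =
              2 * pc x i * qc x i - 2 * lam * (qc x i)\<^sup>2 * qp_on {1..CARD('n)} x / D"
    unfolding shear_def deriv_Frad_diag[OF nz i, folded D_def] using i D
    by (simp add: qp_on_def sum_divide_distrib[symmetric] field_simps mult.commute)
  define \<alpha> where "\<alpha> = (\<omega>\<^sup>2 - lam * psq x) / D\<^sup>2"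
  have "(\<Sum>k=1..CARD('n). \<alpha> * qc x k * qc x k + pc x k * - pc x k / D) =
        (\<Sum>k=1..CARD('n). \<alpha> * (qc x k)\<^sup>2 - 1 / D * (pc x k)\<^sup>2)"
    by (rule sum.cong) (simp_all add: power2_eq_square)
  also have "\<dots> = \<alpha> * qsq x - 1 / D * psq x"
    by (simp only: sum_subtractf sum_distrib_left[symmetric] qsq_def[symmetric] psq_def[symmetric])
  finally have dil: "frechet_derivative (Frad lam \<omega> i i) (at x) (dilation x) =
              2 * \<alpha> * D * (qc x i)\<^sup>2 - 2 * (pc x i)\<^sup>2 - 2 * lam * (qc x i)\<^sup>2 * (\<alpha> * qsq x - 1 / D * psq x)"
    unfolding dilation_def deriv_Frad_diag[OF nz i, where \<omega> = \<omega>, folded D_def, folded \<alpha>_def] using i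
    by (simp add: power2_eq_square)
  show ?thesis
    unfolding sh dil deriv_Ham_shear[OF nz] deriv_Ham_dilation[OF nz] D_def[symmetric]
      HI_det_numer_def Let_def \<alpha>_def
    using D by (simp add: field_simps power2_eq_square power3_eq_cube)
qed

lemma deriv_angmom_sq_rotation_pair:
  assumes A: "A \<subseteq> {1..CARD('n)}" and m: "2 \<le> m"
  shows "frechet_derivative (angmom_sq A) (at x) (rotation_pair x m) =
    rotation_coeff {m<..CARD('n)} m (m+1) x *
      ((if 1 \<in> A then 2 * rotation_coeff A 1 (m+1) x else 0)
          - (if m+1 \<in> A then 2 * rotation_coeff A 1 (m+1) x else 0))
    - rotation_coeff {m<..CARD('n)} 1 (m+1) x *
      ((if m \<in> A then 2 * rotation_coeff A m (m+1) x else 0)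
          - (if m+1 \<in> A then 2 * rotation_coeff A m (m+1) x else 0))"
  unfolding rotation_pair_def
  using m by (simp add: frechet_derivative_lincomb has_grad_differentiable[OF has_grad_angmom_sq[OF A]]
                        deriv_angmom_sq_rotation[OF A])

lemma deriv_angmom_sq_shear_dilation:
  assumes "A \<subseteq> {1..CARD('n)}"
  shows "frechet_derivative (angmom_sq A) (at x) (a *\<^sub>R shear x - b *\<^sub>R dilation x) = 0"
  using assms by (simp add: frechet_derivative_lincomb has_grad_differentiable[OF has_grad_angmom_sq]
                            deriv_angmom_sq_shear deriv_angmom_sq_dilation)

end

definition superintegrable_labels :: "nat \<Rightarrow> nat \<Rightarrow> integral_label list" where
  "superintegrable_labels N i = [Hamiltonian] @ map Up [2..<N+1] @ map Down [2..<N] @ [Fradkin i]"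

definition super_rank :: "nat \<Rightarrow> integral_label \<Rightarrow> nat" where
  "super_rank N a = (case a of Up m \<Rightarrow> 2 * m | Down m \<Rightarrow> 2 * (N - m) + 1 | _ \<Rightarrow> 0)"

text \<open>
  Shear and dilation annihilate all \<open>C\<^sub>A\<close>; the two combinations of them separate \<open>\<H>\<^sub>\<lambda>\<close>
  from \<open>I\<^sub>i\<^sub>i\<close>. The rotation of the pair \<open>(l, l + 1)\<close> is seen by \<open>C\<^sub>A\<close> only if exactly one of
  \<open>l, l + 1\<close> lies in \<open>A\<close>, i.e. only by \<open>Cup l\<close> and \<open>Cdown (N - l)\<close>; \<open>rotation_pair x m\<close> is
  the combination of two rotations that is not seen by \<open>Cdown (N - m)\<close>.
\<close>

definition super_vector :: "real \<Rightarrow> real \<Rightarrow> nat \<Rightarrow> 'n::{finite,linorder} phase \<Rightarrow> integral_label \<Rightarrow> 'n phase" where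
  "super_vector lam \<omega> i x a = (case a of
      Hamiltonian \<Rightarrow> frechet_derivative (Frad lam \<omega> i i) (at x) (dilation x) *\<^sub>R shear x
                    - frechet_derivative (Frad lam \<omega> i i) (at x) (shear x) *\<^sub>R dilation x
    | Fradkin _ \<Rightarrow> frechet_derivative (Ham lam \<omega>) (at x) (dilation x) *\<^sub>R shear x
                    - frechet_derivative (Ham lam \<omega>) (at x) (shear x) *\<^sub>R dilation x
    | Up m \<Rightarrow> if m = CARD('n) then unit_p 1
              else if m = CARD('n) - 1 then rotation x m (m + 1) else rotation_pair x m
    | Down m \<Rightarrow> rotation x (CARD('n) - m) (CARD('n) - m + 1))"

context
  fixes lam \<omega> :: real and x :: "'n::{finite,linorder} phase" and i :: nat
  assumes nz: "1 + lam * qsq x \<noteq> 0" and i: "i \<in> {1..CARD('n)}"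
begin

lemma Ham_Frad_differentiable:
  "Ham lam \<omega> differentiable (at x)" "Frad lam \<omega> i i differentiable (at x)"
  using has_grad_differentiable[OF has_grad_Ham[OF nz]] has_grad_differentiable[OF has_grad_Frad[OF nz i i]]
  by auto

lemma super_vector_Ham_Frad_nonzero:
  assumes "HI_det_numer lam \<omega> i x \<noteq> 0" and "a \<in> {Hamiltonian, Fradkin i}"
  shows "frechet_derivative (integral_of lam \<omega> a) (at x) (super_vector lam \<omega> i x a) \<noteq> 0"
proof -
  have "frechet_derivative (Ham lam \<omega>) (at x) (shear x)
      * frechet_derivative (Frad lam \<omega> i i) (at x) (dilation x)
      - frechet_derivative (Ham lam \<omega>) (at x) (dilation x)
          * frechet_derivative (Frad lam \<omega> i i) (at x) (shear x) \<noteq> 0"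
    using HI_det_eq[OF nz i] assms(1) nz by simp
  then show ?thesis
    using assms(2) Ham_Frad_differentiable
    by (auto simp: super_vector_def frechet_derivative_lincomb algebra_simps)
qed

lemma super_vector_Ham_Frad:
  assumes "a \<in> {Hamiltonian, Fradkin i}" and "b \<in> set (superintegrable_labels CARD('n) i)" and "b \<noteq> a"
  shows "frechet_derivative (integral_of lam \<omega> b) (at x) (super_vector lam \<omega> i x a) = 0"
  using assms Ham_Frad_differentiable
  by (auto simp: superintegrable_labels_def super_vector_def Cup_eq_angmom_sq Cdown_eq_angmom_sq
                 deriv_angmom_sq_shear_dilation frechet_derivative_lincomb)

lemma super_vector_Up_nonzero:
  assumes m: "m \<in> {2..CARD('n)}"
    and top: "dp_angmom_sq_half {0<..CARD('n)} 1 x \<noteq> 0"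
    and next_top: "CARD('n) \<ge> 3 \<Longrightarrow> rotation_coeff {0<..CARD('n) - 1} (CARD('n) - 1) (CARD('n)) x \<noteq> 0"
    and mid: "m \<le> CARD('n) - 2 \<Longrightarrow> rotation_det m x \<noteq> 0"
  shows "frechet_derivative (Cup m) (at x) (super_vector lam \<omega> i x (Up m)) \<noteq> 0"
proof -
  consider "m = CARD('n)" | "m = CARD('n) - 1" "CARD('n) \<ge> 3" | "m \<le> CARD('n) - 2"
    using m by fastforce
  then show ?thesis
  proof cases
    case 1
    then show ?thesis
      using top by (simp add: super_vector_def Cup_eq_angmom_sq deriv_angmom_sq_unit_p)
  next
    case 2
    then show ?thesis
      using next_top by (simp add: super_vector_def Cup_eq_angmom_sq deriv_angmom_sq_rotation)
  next
    case 3
    then show ?thesis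
      using m mid
      by (auto simp: super_vector_def Cup_eq_angmom_sq deriv_angmom_sq_rotation_pair
          rotation_det_def algebra_simps)
  qed
qed

lemma super_vector_Up:
  assumes a: "m \<in> {2..CARD('n)}" and b: "b \<in> set (superintegrable_labels CARD('n) i)" "b \<noteq> Up m"
    and rank: "super_rank CARD('n) (Up m) \<le> super_rank CARD('n) b"
  shows "frechet_derivative (integral_of lam \<omega> b) (at x) (super_vector lam \<omega> i x (Up m)) = 0"
proof -
  have parity: "2 * m \<le> Suc (2 * k) \<longleftrightarrow> m \<le> k" for k
    by presburger
  show ?thesis
  proof (cases b)
    case (Up m')
    then have "m < m'" "m' \<le> CARD('n)"
      using b rank by (auto simp: superintegrable_labels_def super_rank_def)
    then show ?thesis
      using a Up by (auto simp: super_vector_def Cup_eq_angmom_sq deriv_angmom_sq_rotation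
          deriv_angmom_sq_rotation_pair)
  next
    case (Down m')
    then have "m \<le> CARD('n) - m'" "m' \<in> {2..CARD('n) - 1}"
      using b rank by (auto simp: superintegrable_labels_def super_rank_def parity)
    then show ?thesis
      using a Down
      by (cases "CARD('n) - m' = m")
         (auto simp: super_vector_def Cdown_eq_angmom_sq deriv_angmom_sq_rotation deriv_angmom_sq_rotation_pair)
  qed (use a rank in \<open>auto simp: super_rank_def\<close>)
qed

lemma super_vector_Down_nonzero:
  assumes m: "m \<in> {2..CARD('n) - 1}"
    and low: "rotation_coeff {CARD('n) - m<..CARD('n)} (CARD('n) - m) (CARD('n) - m + 1) x \<noteq> 0"
  shows "frechet_derivative (Cdown m) (at x) (super_vector lam \<omega> i x (Down m)) \<noteq> 0"
  using m low by (auto simp: super_vector_def Cdown_eq_angmom_sq deriv_angmom_sq_rotation)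

lemma super_vector_Down:
  assumes a: "m \<in> {2..CARD('n) - 1}" and b: "b \<in> set (superintegrable_labels CARD('n) i)" "b \<noteq> Down m"
    and rank: "super_rank CARD('n) (Down m) \<le> super_rank CARD('n) b"
  shows "frechet_derivative (integral_of lam \<omega> b) (at x) (super_vector lam \<omega> i x (Down m)) = 0"
  using a b rank
  by (auto simp: superintegrable_labels_def super_rank_def super_vector_def Cup_eq_angmom_sq Cdown_eq_angmom_sq
                 deriv_angmom_sq_rotation split: if_splits)

lemma differentials_indep_superintegrable:
  assumes HI: "HI_det_numer lam \<omega> i x \<noteq> 0"
    and top: "dp_angmom_sq_half {0<..CARD('n)} 1 x \<noteq> 0"
    and next_top: "CARD('n) \<ge> 3 \<Longrightarrow> rotation_coeff {0<..CARD('n) - 1} (CARD('n) - 1) (CARD('n)) x \<noteq> 0"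
    and mid: "\<And>m. m \<in> {2..CARD('n) - 2} \<Longrightarrow> rotation_det m x \<noteq> 0"
    and low: "\<And>l. l \<in> {1..CARD('n) - 2} \<Longrightarrow> rotation_coeff {l<..CARD('n)} l (l + 1) x \<noteq> 0"
  shows "differentials_indep ([Ham lam \<omega>] @ map Cup [2..<CARD('n)+1] @ map Cdown [2..<CARD('n)]
                              @ [Frad lam \<omega> i i]) x"
proof -
  let ?ls = "superintegrable_labels CARD('n) i"
  let ?D = "\<lambda>a b. frechet_derivative (integral_of lam \<omega> b) (at x) (super_vector lam \<omega> i x a)"
  have key: "?D a a \<noteq> 0 \<and> (\<forall>b\<in>set ?ls. b \<noteq> a \<longrightarrow> super_rank CARD('n) a \<le> super_rank CARD('n) b \<longrightarrow> ?D a b = 0)"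
    if a: "a \<in> set ?ls" for a
  proof -
    consider "a \<in> {Hamiltonian, Fradkin i}" | m where "a = Up m" "m \<in> {2..CARD('n)}"
      | m where "a = Down m" "m \<in> {2..CARD('n) - 1}"
      using a by (auto simp: superintegrable_labels_def)
    then show ?thesis
    proof cases
      case 1
      then show ?thesis
        using HI super_vector_Ham_Frad_nonzero super_vector_Ham_Frad by blast
    next
      case (2 m)
      then show ?thesis
        using top next_top mid[of m] super_vector_Up_nonzero[of m] super_vector_Up[of m] by auto
    next
      case (3 m)
      moreover have "CARD('n) - m \<in> {1..CARD('n) - 2}"
        using 3 by auto
      ultimately show ?thesis
        using low super_vector_Down_nonzero[of m] super_vector_Down[of m] by auto
    qed
  qed
  have "differentials_indep (map (integral_of lam \<omega>) ?ls) x"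
  proof (rule differentials_indep_triangular[where v = "super_vector lam \<omega> i x" and r = "super_rank CARD('n)"])
    show "distinct ?ls"
      by (auto simp: superintegrable_labels_def distinct_map inj_on_def)
    show "integral_of lam \<omega> a differentiable (at x)" if "a \<in> set ?ls" for a
      using that Ham_Frad_differentiable
      by (auto simp: superintegrable_labels_def Cup_differentiable Cdown_differentiable)
  qed (use key in blast)+
  then show ?thesis
    by (simp add: superintegrable_labels_def comp_def)
qed

end

section \<open>Obstruction polynomials and witness points\<close>

definition indicator_point :: "real \<Rightarrow> nat set \<Rightarrow> real \<Rightarrow> nat set \<Rightarrow> 'n::{finite,linorder} phase" where
  "indicator_point a Tq b Tp = phase_of (\<lambda>i. if i \<in> Tq then a else 0) (\<lambda>i. if i \<in> Tp then b else 0)"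

context
  fixes a b :: real and Tq Tp :: "nat set"
begin

lemma qc_indicator_point [simp]:
  "i \<in> {1..CARD('n)} \<Longrightarrow> qc (indicator_point a Tq b Tp :: 'n::{finite,linorder} phase) i
      = (if i \<in> Tq then a else 0)"
  and pc_indicator_point [simp]:
  "i \<in> {1..CARD('n)} \<Longrightarrow> pc (indicator_point a Tq b Tp :: 'n phase) i = (if i \<in> Tp then b else 0)"
  by (simp_all add: indicator_point_def)

lemma quadratic_forms_indicator_point:
  assumes "A \<subseteq> {1..CARD('n)}"
  shows "qsq_on A (indicator_point a Tq b Tp :: 'n::{finite,linorder} phase) = card (A \<inter> Tq) * a\<^sup>2"
    and "psq_on A (indicator_point a Tq b Tp :: 'n phase) = card (A \<inter> Tp) * b\<^sup>2"
    and "qp_on A (indicator_point a Tq b Tp :: 'n phase) = card (A \<inter> Tq \<inter> Tp) * (a * b)"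
proof -
  have "finite A" using assms finite_subset by blast
  have "qsq_on A (indicator_point a Tq b Tp :: 'n phase) = (\<Sum>i\<in>A. if i \<in> Tq then a\<^sup>2 else 0)"
    and "psq_on A (indicator_point a Tq b Tp :: 'n phase) = (\<Sum>i\<in>A. if i \<in> Tp then b\<^sup>2 else 0)"
    and "qp_on A (indicator_point a Tq b Tp :: 'n phase) = (\<Sum>i\<in>A. if i \<in> Tq \<inter> Tp then a * b else 0)"
    unfolding qsq_on_def psq_on_def qp_on_def using assms by (auto intro!: sum.cong)
  then show "qsq_on A (indicator_point a Tq b Tp :: 'n phase) = card (A \<inter> Tq) * a\<^sup>2"
    and "psq_on A (indicator_point a Tq b Tp :: 'n phase) = card (A \<inter> Tp) * b\<^sup>2"
    and "qp_on A (indicator_point a Tq b Tp :: 'n phase) = card (A \<inter> Tq \<inter> Tp) * (a * b)"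
    using \<open>finite A\<close> by (simp_all add: sum.If_cases Int_assoc Int_def[symmetric])
qed

end

lemma qsq_psq_indicator_point:
  fixes a b :: real
  shows "qsq (indicator_point a Tq b Tp :: 'n::{finite,linorder} phase) = card ({1..CARD('n)} \<inter> Tq) * a\<^sup>2"
  "psq (indicator_point a Tq b Tp :: 'n phase) = card ({1..CARD('n)} \<inter> Tp) * b\<^sup>2"
  by (simp_all add: qsq_eq_qsq_on psq_eq_psq_on quadratic_forms_indicator_point)

lemma real_polynomial_function_qc: "real_polynomial_function (\<lambda>x::'n::{finite,linorder} phase. qc x i)"
  and real_polynomial_function_pc: "real_polynomial_function (\<lambda>x::'n::{finite,linorder} phase. pc x i)"
  by (simp_all add: real_polynomial_function.intros(1) bounded_linear_qc bounded_linear_pc)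

lemma real_polynomial_function_quadratic_forms:
  assumes "finite A"
  shows "real_polynomial_function (qsq_on A :: 'n::{finite,linorder} phase \<Rightarrow> real)"
    and "real_polynomial_function (psq_on A :: 'n phase \<Rightarrow> real)"
    and "real_polynomial_function (qp_on A :: 'n phase \<Rightarrow> real)"
  unfolding qsq_on_def[abs_def] psq_on_def[abs_def] qp_on_def[abs_def]
  using assms by (auto intro!: real_polynomial_function_sum real_polynomial_function_power
                    real_polynomial_function.intros(4) real_polynomial_function_qc real_polynomial_function_pc)

lemma real_polynomial_function_obstructions:
  "real_polynomial_function (dilation_Ham_numer lam \<omega> :: 'n::{finite,linorder} phase \<Rightarrow> real)"
  "finite A \<Longrightarrow> real_polynomial_function (dp_angmom_sq_half A j :: 'n phase \<Rightarrow> real)"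
  "finite A \<Longrightarrow> real_polynomial_function (rotation_coeff A k l :: 'n phase \<Rightarrow> real)"
  "real_polynomial_function (rotation_det m :: 'n phase \<Rightarrow> real)"
  "real_polynomial_function (HI_det_numer lam \<omega> i :: 'n phase \<Rightarrow> real)"
  unfolding dilation_Ham_numer_def[abs_def] dp_angmom_sq_half_def[abs_def] rotation_coeff_def[abs_def]
    rotation_det_def[abs_def] HI_det_numer_def[abs_def] Let_def qsq_eq_qsq_on psq_eq_psq_on
  by (intro real_polynomial_function_quadratic_forms real_polynomial_function_qc real_polynomial_function_pc
        real_polynomial_function_diff real_polynomial_function_power real_polynomial_function.intros(3)
        real_polynomial_function.intros(4) real_polynomial_function.intros(2) finite_atLeastAtMost
        finite_greaterThanAtMost | assumption)+

lemma dp_angmom_sq_half_nonzero_somewhere: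
  assumes "A \<subseteq> {1..CARD('n)}" and "j \<in> A" and "k \<in> A" and "k \<noteq> j"
  shows "\<exists>y::'n::{finite,linorder} phase. dp_angmom_sq_half A j y \<noteq> 0"
proof -
  have "A \<inter> {k} = {k}" and "A \<inter> {k} \<inter> {j} = {}"
    using assms by auto
  then have "dp_angmom_sq_half A j (indicator_point 1 {k} 1 {j} :: 'n phase) = 1"
    using assms by (auto simp: dp_angmom_sq_half_def quadratic_forms_indicator_point)
  then show ?thesis by (intro exI[of _ "indicator_point 1 {k} 1 {j}"]) simp
qed

lemma rotation_coeff_nonzero_somewhere:
  assumes "A \<subseteq> {1..CARD('n)}" and "j \<in> A" and "k \<in> {1..CARD('n)}" "l \<in> {1..CARD('n)}"
    and "j \<noteq> k" "j \<noteq> l"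
  shows "\<exists>y::'n::{finite,linorder} phase. rotation_coeff A k l y \<noteq> 0"
proof -
  have "A \<inter> {j} = {j}" and "A \<inter> {k, l} \<inter> {j} = {}"
    using assms by auto
  then have "rotation_coeff A k l (indicator_point 1 {k, l} 1 {j} :: 'n phase) = 1"
    using assms by (auto simp: rotation_coeff_def quadratic_forms_indicator_point)
  then show ?thesis by (intro exI[of _ "indicator_point 1 {k, l} 1 {j}"]) simp
qed

lemma rotation_det_nonzero_somewhere:
  assumes "2 \<le> m" and "m \<le> CARD('n) - 2"
  shows "\<exists>y::'n::{finite,linorder} phase. rotation_det m y \<noteq> 0"
proof -
  let ?y = "indicator_point 1 {m, m+2} 1 {1, m+1, m+2} :: 'n phase"
  have A: "{0<..m} \<subseteq> {1..CARD('n)}" "{m<..CARD('n)} \<subseteq> {1..CARD('n)}"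
    using assms by auto
  have "{0<..m} \<inter> {m, m+2} = {m}" and "{0<..m} \<inter> {1, m+1, m+2} = {1}"
    and "{0<..m} \<inter> {m, m+2} \<inter> {1, m+1, m+2} = {}" and "{m<..CARD('n)} \<inter> {m, m+2} = {m+2}"
    and "{m<..CARD('n)} \<inter> {1, m+1, m+2} = {m+1, m+2}"
    and "{m<..CARD('n)} \<inter> {m, m+2} \<inter> {1, m+1, m+2} = {m+2}"
    using assms by auto
  then have "rotation_det m ?y = -1"
    using assms by (simp add: rotation_det_def rotation_coeff_def quadratic_forms_indicator_point[OF A(1)]
                      quadratic_forms_indicator_point[OF A(2)])
  then show ?thesis by (intro exI[of _ ?y]) simp
qed

lemma HI_det_numer_nonzero_somewhere:
  assumes N: "CARD('n::{finite,linorder}) \<ge> 2" and i: "i \<in> {1..CARD('n)}"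
  shows "\<exists>y::'n phase. HI_det_numer lam \<omega> i y \<noteq> 0"
proof -
  define k where "k = (if i = 1 then 2 else 1 :: nat)"
  have k: "k \<in> {1..CARD('n)}" "k \<noteq> i"
    using N i by (auto simp: k_def)
  obtain s :: real where s: "s \<noteq> 0" "1 + lam * s\<^sup>2 \<noteq> 0"
  proof (cases "lam = -1")
    case True
    then show ?thesis using that[of 2] by simp
  next
    case False
    then show ?thesis using that[of 1] by simp
  qed
  let ?y = "indicator_point s {i} 1 {i, k} :: 'n phase"
  have "{1..CARD('n)} \<inter> {i} = {i}" "{1..CARD('n)} \<inter> {i, k} = {i, k}" "{1..CARD('n)} \<inter> {i} \<inter> {i, k} = {i}"
    using i k by auto
  then have "qsq ?y = s\<^sup>2" "psq ?y = 2" "qp_on {1..CARD('n)} ?y = s"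
    using k by (simp_all add: qsq_psq_indicator_point quadratic_forms_indicator_point)
  then have "HI_det_numer lam \<omega> i ?y = 2 * s * (1 + lam * s\<^sup>2)\<^sup>2"
    using i k by (simp add: HI_det_numer_def dilation_Ham_numer_def Let_def algebra_simps power2_eq_square)
  then show ?thesis
    using s by (intro exI[of _ ?y]) simp
qed

lemma dilation_Ham_numer_nonzero_somewhere:
  "\<exists>y::'n::{finite,linorder} phase. dilation_Ham_numer lam \<omega> y \<noteq> 0"
proof -
  have "{1..CARD('n)} \<inter> {1} = {1}"
    by auto
  then have "dilation_Ham_numer lam \<omega> (indicator_point 0 {} 1 {1} :: 'n phase) = -1"
    by (simp add: dilation_Ham_numer_def qsq_psq_indicator_point)
  then show ?thesis by (intro exI[of _ "indicator_point 0 {} 1 {1}"]) simp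
qed

section \<open>Constants of motion, involution and independence\<close>

lemma open_phase_space: "open (phase_space lam :: 'n::{finite,linorder} phase set)"
proof -
  have "real_polynomial_function (\<lambda>x::'n phase. 1 + lam * qsq x)"
    unfolding qsq_eq_qsq_on
    by (intro real_polynomial_function.intros(2-4) real_polynomial_function_quadratic_forms) simp
  then show ?thesis
    unfolding phase_space_def by (rule real_polynomial_function_open_nonzero)
qed

lemma poisson_commute_angmom_sq_Ham:
  assumes A: "A \<subseteq> {1..CARD('n)}"
  shows "poisson_commute (phase_space lam :: 'n::{finite,linorder} phase set) (angmom_sq A) (Ham lam \<omega>)"
  unfolding poisson_commute_def
proof (intro ballI conjI)
  fix x :: "'n phase"
  assume "x \<in> phase_space lam"
  then have nz: "1 + lam * qsq x \<noteq> 0" by (simp add: phase_space_def)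
  show "angmom_sq A differentiable (at x)" by (rule has_grad_differentiable[OF has_grad_angmom_sq[OF A]])
  show "Ham lam \<omega> differentiable (at x)" by (rule has_grad_differentiable[OF has_grad_Ham[OF nz]])
  show "poisson (angmom_sq A) (Ham lam \<omega>) x = 0" by (rule poisson_angmom_sq_Ham[OF A nz])
qed

lemma poisson_commute_angmom_sq_nested:
  assumes A: "A \<subseteq> {1..CARD('n)}" and B: "B \<subseteq> {1..CARD('n)}" and "A \<subseteq> B \<or> B \<subseteq> A"
  shows "poisson_commute (M :: 'n::{finite,linorder} phase set) (angmom_sq A) (angmom_sq B)"
  unfolding poisson_commute_def
proof (intro ballI conjI)
  fix x :: "'n phase"
  show "angmom_sq A differentiable (at x)" by (rule has_grad_differentiable[OF has_grad_angmom_sq[OF A]])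
  show "angmom_sq B differentiable (at x)" by (rule has_grad_differentiable[OF has_grad_angmom_sq[OF B]])
  show "poisson (angmom_sq A) (angmom_sq B) x = 0"
    using assms poisson_angmom_sq_subset[of A B x] poisson_angmom_sq_subset[of B A x]
      poisson_anticomm[of "angmom_sq A" "angmom_sq B" x]
    by auto
qed

lemma poisson_commute_Frad_Ham:
  assumes ij: "i \<in> {1..CARD('n)}" "j \<in> {1..CARD('n)}"
  shows "poisson_commute (phase_space lam :: 'n::{finite,linorder} phase set) (Frad lam \<omega> i j) (Ham lam \<omega>)"
  unfolding poisson_commute_def
proof (intro ballI conjI)
  fix x :: "'n phase"
  assume "x \<in> phase_space lam"
  then have nz: "1 + lam * qsq x \<noteq> 0" by (simp add: phase_space_def)
  show "Frad lam \<omega> i j differentiable (at x)" by (rule has_grad_differentiable[OF has_grad_Frad[OF nz ij]])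
  show "Ham lam \<omega> differentiable (at x)" by (rule has_grad_differentiable[OF has_grad_Ham[OF nz]])
  show "poisson (Frad lam \<omega> i j) (Ham lam \<omega>) x = 0" by (rule poisson_Frad_Ham[OF nz ij])
qed

lemma in_involution_intro:
  "(\<And>f g. f \<in> set fs \<Longrightarrow> g \<in> set fs \<Longrightarrow> poisson_commute M f g) \<Longrightarrow> in_involution M fs"
  unfolding in_involution_def by simp

lemma poisson_commute_Ham_Ham:
  "poisson_commute (phase_space lam :: 'n::{finite,linorder} phase set) (Ham lam \<omega>) (Ham lam \<omega>)"
  unfolding poisson_commute_def
proof (intro ballI conjI)
  fix x :: "'n phase"
  assume "x \<in> phase_space lam"
  then show "Ham lam \<omega> differentiable (at x)" "Ham lam \<omega> differentiable (at x)"
    by (intro has_grad_differentiable[OF has_grad_Ham], simp add: phase_space_def)+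
  show "poisson (Ham lam \<omega>) (Ham lam \<omega>) x = 0"
    by (rule poisson_self)
qed

lemma in_involution_Ham_angmom_sq_chain:
  assumes sub: "\<forall>A\<in>set As. A \<subseteq> {1..CARD('n)}" and chain: "\<forall>A\<in>set As. \<forall>B\<in>set As. A \<subseteq> B \<or> B \<subseteq> A"
  shows "in_involution (phase_space lam :: 'n::{finite,linorder} phase set) (Ham lam \<omega> # map angmom_sq As)"
proof (rule in_involution_intro)
  fix f g :: "'n phase \<Rightarrow> real"
  assume "f \<in> set (Ham lam \<omega> # map angmom_sq As)" "g \<in> set (Ham lam \<omega> # map angmom_sq As)"
  then consider "f = Ham lam \<omega>" "g = Ham lam \<omega>"
    | A where "A \<in> set As" "f = angmom_sq A" "g = Ham lam \<omega>"
    | B where "B \<in> set As" "f = Ham lam \<omega>" "g = angmom_sq B"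
    | A B where "A \<in> set As" "B \<in> set As" "f = angmom_sq A" "g = angmom_sq B"
    by auto
  then show "poisson_commute (phase_space lam) f g"
  proof cases
    case 1
    then show ?thesis by (simp add: poisson_commute_Ham_Ham)
  next
    case (2 A)
    then show ?thesis using sub poisson_commute_angmom_sq_Ham[of A, where 'n = 'n] by simp
  next
    case (3 B)
    then show ?thesis using sub poisson_commute_sym[OF poisson_commute_angmom_sq_Ham[of B, where 'n = 'n]]
        by simp
  next
    case (4 A B)
    then show ?thesis using sub chain poisson_commute_angmom_sq_nested[of A B, where 'n = 'n] by simp
  qed
qed

lemma in_involution_Ham_Cup:
  "in_involution (phase_space lam :: 'n::{finite,linorder} phase set) (Ham lam \<omega> # map Cup [2..<CARD('n)+1])"
proof -
  have eq: "map Cup [2..<CARD('n)+1]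
      = (map angmom_sq (map (\<lambda>m. {0<..m}) [2..<CARD('n)+1]) :: ('n phase \<Rightarrow> real) list)"
    by (simp add: Cup_eq_angmom_sq comp_def)
  show ?thesis
    unfolding eq by (rule in_involution_Ham_angmom_sq_chain; force)
qed

lemma in_involution_Ham_Cdown:
  "in_involution (phase_space lam :: 'n::{finite,linorder} phase set) (Ham lam \<omega> # map Cdown [2..<CARD('n)+1])"
proof -
  have eq: "map Cdown [2..<CARD('n)+1] =
          (map angmom_sq (map (\<lambda>m. {CARD('n) - m<..CARD('n)}) [2..<CARD('n)+1]) :: ('n phase \<Rightarrow> real) list)"
    by (simp add: Cdown_eq_angmom_sq comp_def)
  show ?thesis
    unfolding eq by (rule in_involution_Ham_angmom_sq_chain; force)
qed

lemma in_involution_Frad_diag: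
  "in_involution (phase_space lam :: 'n::{finite,linorder} phase set)
      (map (\<lambda>i. Frad lam \<omega> i i) [1..<CARD('n)+1])"
proof (rule in_involution_intro)
  fix f g :: "'n phase \<Rightarrow> real"
  assume "f \<in> set (map (\<lambda>i. Frad lam \<omega> i i) [1..<CARD('n)+1])"
    and "g \<in> set (map (\<lambda>i. Frad lam \<omega> i i) [1..<CARD('n)+1])"
  then obtain i j where ij: "i \<in> {1..CARD('n)}" "j \<in> {1..CARD('n)}"
      and fg: "f = Frad lam \<omega> i i" "g = Frad lam \<omega> j j"
    by (force simp del: upt_Suc simp: atLeastLessThanSuc_atLeastAtMost)
  show "poisson_commute (phase_space lam) f g"
    unfolding poisson_commute_def fg
  proof (intro ballI conjI)
    fix x :: "'n phase"
    assume "x \<in> phase_space lam"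
    then have nz: "1 + lam * qsq x \<noteq> 0" by (simp add: phase_space_def)
    show "Frad lam \<omega> i i differentiable (at x)" "Frad lam \<omega> j j differentiable (at x)"
      using has_grad_differentiable[OF has_grad_Frad[OF nz]] ij by auto
    show "poisson (Frad lam \<omega> i i) (Frad lam \<omega> j j) x = 0" by (rule poisson_Frad_diag[OF nz ij])
  qed
qed

lemma funct_indep_Ham_Cup:
  "funct_indep (phase_space lam :: 'n::{finite,linorder} phase set) (Ham lam \<omega> # map Cup [2..<CARD('n)+1])"
proof (rule funct_indep_intro[OF open_phase_space,
      where G = "insert (dilation_Ham_numer lam \<omega>) ((\<lambda>m. dp_angmom_sq_half {0<..m} m) ` {2..CARD('n)})"])
  show "\<forall>g\<in>insert (dilation_Ham_numer lam \<omega>) ((\<lambda>m. dp_angmom_sq_half {0<..m} m) ` {2..CARD('n)}).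
          real_polynomial_function g \<and> (\<exists>y::'n phase. g y \<noteq> 0)"
    by (auto simp: real_polynomial_function_obstructions dilation_Ham_numer_nonzero_somewhere
             simp del: split_paired_Ex intro!: dp_angmom_sq_half_nonzero_somewhere[where k = 1])
next
  fix x :: "'n phase"
  assume "x \<in> phase_space lam"
    and "\<forall>g\<in>insert (dilation_Ham_numer lam \<omega>) ((\<lambda>m. dp_angmom_sq_half {0<..m} m) ` {2..CARD('n)}). g x \<noteq> 0"
  then show "differentials_indep (Ham lam \<omega> # map Cup [2..<CARD('n)+1]) x"
    by (intro differentials_indep_Ham_Cup) (auto simp: phase_space_def)
qed simp

lemma funct_indep_Ham_Cdown:
  "funct_indep (phase_space lam :: 'n::{finite,linorder} phase set) (Ham lam \<omega> # map Cdown [2..<CARD('n)+1])"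
proof (rule funct_indep_intro[OF open_phase_space, where G = "insert (dilation_Ham_numer lam \<omega>)
      ((\<lambda>m. dp_angmom_sq_half {CARD('n) - m<..CARD('n)} (CARD('n) - m + 1)) ` {2..CARD('n)})"])
  show "\<forall>g\<in>insert (dilation_Ham_numer lam \<omega>)
          ((\<lambda>m. dp_angmom_sq_half {CARD('n) - m<..CARD('n)} (CARD('n) - m + 1)) ` {2..CARD('n)}).
          real_polynomial_function g \<and> (\<exists>y::'n phase. g y \<noteq> 0)"
    by (auto simp: real_polynomial_function_obstructions dilation_Ham_numer_nonzero_somewhere
             simp del: split_paired_Ex intro!: dp_angmom_sq_half_nonzero_somewhere[where k = "CARD('n)"])
next
  fix x :: "'n phase"
  assume "x \<in> phase_space lam" and "\<forall>g\<in>insert (dilation_Ham_numer lam \<omega>)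
      ((\<lambda>m. dp_angmom_sq_half {CARD('n) - m<..CARD('n)} (CARD('n) - m + 1)) ` {2..CARD('n)}). g x \<noteq> 0"
  then show "differentials_indep (Ham lam \<omega> # map Cdown [2..<CARD('n)+1]) x"
    by (intro differentials_indep_Ham_Cdown) (auto simp: phase_space_def)
qed simp

lemma funct_indep_Frad_diag:
  "funct_indep (phase_space lam :: 'n::{finite,linorder} phase set) (map (\<lambda>i. Frad lam \<omega> i i) [1..<CARD('n)+1])"
proof (rule funct_indep_intro[OF open_phase_space, where G = "(\<lambda>j x. pc x j) ` {1..CARD('n)}"])
  show "\<forall>g\<in>(\<lambda>j x. pc x j) ` {1..CARD('n)}. real_polynomial_function g \<and> (\<exists>y::'n phase. g y \<noteq> 0)"
  proof
    fix g :: "'n phase \<Rightarrow> real"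
    assume "g \<in> (\<lambda>j x. pc x j) ` {1..CARD('n)}"
    then obtain j where "j \<in> {1..CARD('n)}" "g = (\<lambda>x. pc x j)" by auto
    moreover have "pc (indicator_point 0 {} 1 {j} :: 'n phase) j \<noteq> 0" if "j \<in> {1..CARD('n)}"
      using that by simp
    ultimately show "real_polynomial_function g \<and> (\<exists>y. g y \<noteq> 0)"
      using real_polynomial_function_pc by blast
  qed
next
  fix x :: "'n phase"
  assume "x \<in> phase_space lam" and "\<forall>g\<in>(\<lambda>j x. pc x j) ` {1..CARD('n)}. g x \<noteq> 0"
  then show "differentials_indep (map (\<lambda>i. Frad lam \<omega> i i) [1..<CARD('n)+1]) x"
    by (intro differentials_indep_Frad) (auto simp: phase_space_def)
qed simp

lemma funct_indep_superintegrable: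
  fixes lam \<omega> :: real
  defines "N \<equiv> CARD('n::{finite,linorder})"
  assumes N2: "N \<ge> 2" and i: "i \<in> {1..N}"
  shows "funct_indep (phase_space lam :: 'n phase set)
           ([Ham lam \<omega>] @ map Cup [2..<N+1] @ map Cdown [2..<N] @ [Frad lam \<omega> i i])"
proof -
  define G :: "('n phase \<Rightarrow> real) set" where "G =
    {HI_det_numer lam \<omega> i, dp_angmom_sq_half {0<..N} 1}
    \<union> (if 3 \<le> N then {rotation_coeff {0<..N-1} (N-1) N} else {})
    \<union> rotation_det ` {2..N-2} \<union> (\<lambda>l. rotation_coeff {l<..N} l (l+1)) ` {1..N-2}"
  show ?thesis
  proof (rule funct_indep_intro[OF open_phase_space, where G = G])
    show "finite G" by (simp add: G_def)
    have "\<exists>y::'n phase. HI_det_numer lam \<omega> i y \<noteq> 0"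
      using HI_det_numer_nonzero_somewhere N2 i by (simp add: N_def)
    moreover have "\<exists>y::'n phase. dp_angmom_sq_half {0<..N} 1 y \<noteq> 0"
      using N2 by (intro dp_angmom_sq_half_nonzero_somewhere[where k = 2]) (auto simp: N_def)
    moreover have "\<exists>y::'n phase. rotation_coeff {0<..N-1} (N-1) N y \<noteq> 0" if "3 \<le> N"
      using that by (intro rotation_coeff_nonzero_somewhere[where j = 1]) (auto simp: N_def)
    moreover have "\<exists>y::'n phase. rotation_det m y \<noteq> 0" if "m \<in> {2..N-2}" for m
      using that rotation_det_nonzero_somewhere by (auto simp: N_def)
    moreover have "\<exists>y::'n phase. rotation_coeff {l<..N} l (l+1) y \<noteq> 0" if "l \<in> {1..N-2}" for l
      using that N2 by (intro rotation_coeff_nonzero_somewhere[where j = N]) (auto simp: N_def)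
    ultimately show "\<forall>g\<in>G. real_polynomial_function g \<and> (\<exists>y. g y \<noteq> 0)"
      unfolding G_def by (auto simp: real_polynomial_function_obstructions)
  next
    fix x :: "'n phase"
    assume "x \<in> phase_space lam" and "\<forall>g\<in>G. g x \<noteq> 0"
    then show "differentials_indep ([Ham lam \<omega>] @ map Cup [2..<N+1] @ map Cdown [2..<N] @ [Frad lam \<omega> i i]) x"
      unfolding N_def using i
      by (intro differentials_indep_superintegrable) (auto simp: phase_space_def G_def N_def)
  qed
qed

theorem theorem1:
  fixes lam \<omega> :: real
  assumes N2: "CARD('n::{finite,linorder}) \<ge> 2"
  defines "M \<equiv> (phase_space lam :: 'n phase set)"
      and "N \<equiv> CARD('n)"
      and "H \<equiv> (Ham lam \<omega> :: 'n phase \<Rightarrow> real)"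
  shows
    \<comment> \<open>(i) constants of motion\<close>
    "(\<forall>m\<in>{2..N}. poisson_commute M (Cup m) H \<and> poisson_commute M (Cdown m) H)
     \<and> (Cup N = (Cdown N :: 'n phase \<Rightarrow> real))
     \<and> (\<forall>i\<in>{1..N}. \<forall>j\<in>{1..N}. poisson_commute M (Frad lam \<omega> i j) H)
     \<and> (\<forall>x\<in>M. H x = (1/2) * (\<Sum>i=1..N. Frad lam \<omega> i i x))
     \<comment> \<open>(ii) three Liouville-integrable sets\<close>
     \<and> (length (H # map Cup [2..<N+1]) = N
        \<and> funct_indep M (H # map Cup [2..<N+1]) \<and> in_involution M (H # map Cup [2..<N+1]))
     \<and> (length (H # map Cdown [2..<N+1]) = N
        \<and> funct_indep M (H # map Cdown [2..<N+1]) \<and> in_involution M (H # map Cdown [2..<N+1]))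
     \<and> (length (map (\<lambda>i. Frad lam \<omega> i i) [1..<N+1]) = N
        \<and> funct_indep M (map (\<lambda>i. Frad lam \<omega> i i) [1..<N+1])
        \<and> in_involution M (map (\<lambda>i. Frad lam \<omega> i i) [1..<N+1]))
     \<comment> \<open>(iii) maximal superintegrability (C_(N) = C^(N) is listed once)\<close>
     \<and> (\<forall>i\<in>{1..N}.
          length ([H] @ map Cup [2..<N+1] @ map Cdown [2..<N] @ [Frad lam \<omega> i i]) = 2*N - 1
          \<and> funct_indep M ([H] @ map Cup [2..<N+1] @ map Cdown [2..<N] @ [Frad lam \<omega> i i]))"
proof -
  have N: "N = CARD('n)" by (simp add: N_def)
  have "funct_indep M (H # map Cup [2..<N+1])" "in_involution M (H # map Cup [2..<N+1])"
    "funct_indep M (H # map Cdown [2..<N+1])" "in_involution M (H # map Cdown [2..<N+1])"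
    "funct_indep M (map (\<lambda>i. Frad lam \<omega> i i) [1..<N+1])"
    "in_involution M (map (\<lambda>i. Frad lam \<omega> i i) [1..<N+1])"
    unfolding M_def H_def N
    by (rule funct_indep_Ham_Cup in_involution_Ham_Cup funct_indep_Ham_Cdown in_involution_Ham_Cdown
          funct_indep_Frad_diag in_involution_Frad_diag)+
  moreover have "\<forall>m\<in>{2..N}. poisson_commute M (Cup m) H \<and> poisson_commute M (Cdown m) H"
    by (auto simp: M_def H_def N Cup_eq_angmom_sq Cdown_eq_angmom_sq intro!: poisson_commute_angmom_sq_Ham)
  moreover have "\<forall>i\<in>{1..N}. \<forall>j\<in>{1..N}. poisson_commute M (Frad lam \<omega> i j) H"
    by (simp add: M_def H_def N poisson_commute_Frad_Ham)
  moreover have "\<forall>x\<in>M. H x = (1/2) * (\<Sum>i=1..N. Frad lam \<omega> i i x)"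
    by (simp add: M_def phase_space_def H_def N Ham_eq_half_sum_Frad)
  moreover have "\<forall>i\<in>{1..N}. funct_indep M ([H] @ map Cup [2..<N+1] @ map Cdown [2..<N] @ [Frad lam \<omega> i i])"
    using N2 unfolding M_def H_def N by (blast intro: funct_indep_superintegrable)
  moreover have "Cup N = (Cdown N :: 'n phase \<Rightarrow> real)"
    by (simp add: N Cup_eq_angmom_sq Cdown_eq_angmom_sq)
  moreover have "N \<ge> 2"
    using N2 by (simp add: N)
  ultimately show ?thesis
    by (auto simp del: upt_Suc)
qed

end
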